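(* Let $0<\theta<1$ and $0\le\lambda<\frac{1+\theta}{2}$, and let $N,h,Q\in\mathbb N$ be such that $N^\theta\ll h\ll N^\theta$ and $N^\lambda\ll Q\ll N^\lambda$ as $N\to\infty$. Let $f:\mathbb N\to\mathbb R$ be essentially bounded, with $f=g\ast\mathbf 1$ (i.e. $f(n)=\sum_{d\mid n}g(d)$) where $g:\mathbb N\to\mathbb R$ satisfies $g(q)=0$ for all $q>Q$. Then there exists $\varepsilon_0=\varepsilon_0(\theta,\lambda)>0$, depending only on $\theta$ and $\lambda$, such that $$J_f(N,h)\ll_{\varepsilon_0}Nh^2N^{-\varepsilon_0},\qquad I_f(N,h)\ll_{\varepsilon_0}Nh^2N^{-\varepsilon_0}.$$
   Context: An arithmetic function $F$ is essentially bounded if for every $\varepsilon>0$, $F(n)=O_\varepsilon(n^\varepsilon)$. $\mathrm{sgn}(0)=0$ and $\mathrm{sgn}(r)=|r|/r$ for $r\ne0$. Define $M_f(2h)=2h\sum_{d\le 2N+h}g(d)/d$, the Selberg integral $J_f(N,h)=\int_N^{2N}\Bigl|\sum_{n\in\mathbb N,\,0<|n-x|\le h}f(n)-M_f(2h)\Bigr|^2dx$, and the symmetry integral $I_f(N,h)=\int_N^{2N}\Bigl|\sum_{n\in\mathbb N,\,|n-x|\le h}\mathrm{sgn}(n-x)f(n)\Bigr|^2dx$. *)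

theory Defs
  imports "HOL-Analysis.Analysis"
begin

definition Mf :: "(nat \<Rightarrow> real) \<Rightarrow> nat \<Rightarrow> nat \<Rightarrow> real" where
  "Mf g N h = 2 * real h * (\<Sum>d\<in>{1..2*N+h}. g d / real d)"

definition selberg_J :: "(nat \<Rightarrow> real) \<Rightarrow> (nat \<Rightarrow> real) \<Rightarrow> nat \<Rightarrow> nat \<Rightarrow> real" where
  "selberg_J f g N h = integral {real N..2 * real N}
     (\<lambda>x. \<bar>(\<Sum>n\<in>{n::nat. 1 \<le> n \<and> 0 < \<bar>real n - x\<bar> \<and> \<bar>real n - x\<bar> \<le> real h}. f n)
            - Mf g N h\<bar>^2)"

definition symmetry_I :: "(nat \<Rightarrow> real) \<Rightarrow> nat \<Rightarrow> nat \<Rightarrow> real" where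
  "symmetry_I f N h = integral {real N..2 * real N}
     (\<lambda>x. \<bar>\<Sum>n\<in>{n::nat. 1 \<le> n \<and> \<bar>real n - x\<bar> \<le> real h}. sgn (real n - x) * f n\<bar>^2)"

text \<open>Essential boundedness with explicit constants: |f n| <= C eps * n^eps for all eps > 0.\<close>
definition ess_bounded_by :: "(real \<Rightarrow> real) \<Rightarrow> (nat \<Rightarrow> real) \<Rightarrow> bool" where
  "ess_bounded_by C f \<longleftrightarrow> (\<forall>\<epsilon>>0. \<forall>n\<ge>1. \<bar>f n\<bar> \<le> C \<epsilon> * real n powr \<epsilon>)"

end

theory Submission
  imports Defs "HOL-Computational_Algebra.Primes"
begin

text \<open>
  Since \<open>g\<close> vanishes beyond \<open>Q\<close>, the sum of \<open>f\<close> over a window of length \<open>2h\<close> minus its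
  expected value is \<open>\<Sum>\<^sub>d\<^sub>\<le>\<^sub>Q g(d) (#{multiples of d in the window} - 2h/d)\<close>. Detecting
  divisibility by \<open>d\<close> with the additive characters \<open>e(am/d)\<close> and reducing \<open>a/d = b/q\<close>
  turns this deviation into an exponential sum over the Farey fractions \<open>b/q\<close>, \<open>q \<le> Q\<close>,
  which are \<open>Q\<^sup>-\<^sup>2\<close>-spaced. The large sieve inequality bounds its mean square over \<open>N\<close>
  consecutive windows by \<open>N + Q\<^sup>2 log Q\<close> times the sum of the squared coefficients, and each
  coefficient is small because \<open>\<Sum>\<^sub>i\<^sub><\<^sub>h e(ib/q)\<close> is at most \<open>1/\<parallel>b/q\<parallel>\<close>. Moebius inversion
  bounds \<open>g(d)\<close> by \<open>d\<^sup>\<epsilon>\<close>, so \<open>J\<^sub>f\<close> and \<open>I\<^sub>f\<close> are \<open>O(h (N + Q\<^sup>2) N\<^sup>\<epsilon>)\<close>; this saves a power of \<open>N\<close>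
  over \<open>N h\<^sup>2\<close> because \<open>h \<approx> N\<^sup>\<theta>\<close> and \<open>Q\<^sup>2 \<approx> N\<^sup>2\<^sup>\<lambda>\<close> with \<open>2\<lambda> < 1 + \<theta>\<close>. The integrals over \<open>x\<close>
  are such sums, the window being constant for \<open>x\<close> between consecutive integers; for \<open>I\<^sub>f\<close>
  the weights are \<open>\<plusminus>1\<close>, whose mean vanishes.
\<close>

section \<open>Additive characters and the distance to the nearest integer\<close>

definition e2pi :: "real \<Rightarrow> complex" where
  "e2pi t = cis (2 * pi * t)"

definition dist_int :: "real \<Rightarrow> real" where
  "dist_int x = min (frac x) (1 - frac x)"

lemma e2pi_add: "e2pi (a + b) = e2pi a * e2pi b"
  by (simp add: e2pi_def cis_mult distrib_left)

lemma norm_e2pi [simp]: "norm (e2pi t) = 1"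
  by (simp add: e2pi_def)

lemma cnj_e2pi: "cnj (e2pi t) = e2pi (- t)"
  by (simp add: e2pi_def cis.ctr complex_eq_iff)

lemma e2pi_of_int: "e2pi (of_int n) = 1"
proof -
  have "e2pi (of_int n) = Complex (cos (2 * pi * of_int n)) (sin (2 * pi * of_int n))"
    by (simp only: e2pi_def cis.ctr)
  also have "\<dots> = Complex 1 0"
    by (simp only: cos_int_2pin sin_int_2pin)
  finally show ?thesis
    by (simp add: complex_eq_iff)
qed

lemma e2pi_power: "e2pi t ^ n = e2pi (real n * t)"
  unfolding e2pi_def using Complex.DeMoivre[of "2 * pi * t" n] by (simp add: algebra_simps)

lemma dist_int_le: "dist_int x \<le> \<bar>x - of_int n\<bar>"
proof -
  have fl: "of_int \<lfloor>x\<rfloor> \<le> x" "x < of_int \<lfloor>x\<rfloor> + 1"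
    by linarith+
  show ?thesis
  proof (cases "n \<le> \<lfloor>x\<rfloor>")
    case True
    hence "real_of_int n \<le> of_int \<lfloor>x\<rfloor>" by simp
    thus ?thesis using fl unfolding dist_int_def frac_def by linarith
  next
    case False
    hence "real_of_int n \<ge> of_int \<lfloor>x\<rfloor> + 1" by linarith
    thus ?thesis using fl unfolding dist_int_def frac_def by linarith
  qed
qed

lemma dist_int_greatest:
  assumes "\<And>n::int. c \<le> \<bar>x - of_int n\<bar>"
  shows "c \<le> dist_int x"
proof -
  have "of_int \<lfloor>x\<rfloor> \<le> x" "x < of_int \<lfloor>x\<rfloor> + 1"
    by linarith+
  moreover have "c \<le> \<bar>x - of_int \<lfloor>x\<rfloor>\<bar>" "c \<le> \<bar>x - of_int (\<lfloor>x\<rfloor> + 1)\<bar>"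
    using assms by blast+
  ultimately show ?thesis
    unfolding dist_int_def frac_def by auto
qed

lemma dist_int_nonneg: "0 \<le> dist_int x"
  unfolding dist_int_def using frac_lt_1[of x] frac_ge_0[of x] by simp

lemma dist_int_le_half: "dist_int x \<le> 1/2"
  unfolding dist_int_def by (auto simp: min_def)

lemma dist_int_uminus [simp]: "dist_int (- x) = dist_int x"
proof -
  have "dist_int (- y) \<le> dist_int y" for y
  proof (rule dist_int_greatest)
    fix n :: int
    have "dist_int (- y) \<le> \<bar>- y - of_int (- n)\<bar>" by (rule dist_int_le)
    thus "dist_int (- y) \<le> \<bar>y - of_int n\<bar>" by simp
  qed
  from this[of x] this[of "- x"] show ?thesis by simp
qed

lemma dist_int_commute: "dist_int (x - y) = dist_int (y - x)"
  using dist_int_uminus[of "x - y"] by simp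

lemma dist_int_add_of_int: "dist_int (x + of_int m) = dist_int x"
  unfolding dist_int_def by (simp add: frac_add_of_int_right)

lemma dist_int_eq_0_iff: "dist_int x = 0 \<longleftrightarrow> x \<in> \<int>"
proof -
  have "dist_int x = 0 \<longleftrightarrow> frac x = 0"
    using frac_lt_1[of x] frac_ge_0[of x] unfolding dist_int_def min_def by (auto split: if_splits simp del: frac_eq_0_iff)
  thus ?thesis by (simp only: frac_eq_0_iff)
qed

lemma jordan_sin_ge:
  assumes "0 \<le> x" "x \<le> pi/2"
  shows "2 * x / pi \<le> sin x"
proof (rule ccontr)
  assume "\<not> ?thesis"
  hence neg: "sin x - 2*x/pi < 0" by simp
  define F where "F = (\<lambda>x. sin x - 2*x/pi)"
  have D: "\<And>y. (F has_real_derivative (cos y - 2/pi)) (at y)"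
    unfolding F_def by (auto intro!: derivative_eq_intros)
  have x0: "0 < x" using neg assms by (cases "x = 0") auto
  have x1: "x < pi/2" using neg assms by (cases "x = pi/2") auto
  obtain z1 where z1: "0 < z1" "z1 < x" "F x - F 0 = (x - 0) * (cos z1 - 2/pi)"
    using MVT2[OF x0, of F "\<lambda>y. cos y - 2/pi"] D by blast
  obtain z2 where z2: "x < z2" "z2 < pi/2" "F (pi/2) - F x = (pi/2 - x) * (cos z2 - 2/pi)"
    using MVT2[OF x1, of F "\<lambda>y. cos y - 2/pi"] D by blast
  have F: "F x < 0" "F 0 = 0" "F (pi/2) = 0"
    using neg unfolding F_def by simp_all
  hence c1: "cos z1 - 2/pi < 0"
    using z1 x0 by (simp add: mult_less_0_iff)
  have "0 < -(x * (cos z1 - 2/pi))"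
    using c1 x0 by (simp add: mult_pos_neg)
  also have "-(x * (cos z1 - 2/pi)) = (pi/2 - x) * (cos z2 - 2/pi)"
    using z1 z2 F by simp
  finally have "cos z2 - 2/pi > 0"
    using x1 by (simp add: zero_less_mult_iff)
  note c1 this
  moreover have "cos z2 < cos z1"
    using z1 z2 by (intro cos_monotone_0_pi) auto
  ultimately show False by simp
qed

lemma dist_int_le_abs_sin_pi: "2 * dist_int t \<le> \<bar>sin (pi * t)\<bar>"
proof -
  define s where "s = t - of_int (round t)"
  have s: "\<bar>s\<bar> \<le> 1/2"
    unfolding s_def using of_int_round_abs_le[of t] by (simp add: abs_minus_commute)
  have "dist_int t \<le> \<bar>s\<bar>"
    unfolding s_def by (rule dist_int_le)
  have "sin (pi * t) = sin (pi * s + pi * of_int (round t))"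
    unfolding s_def by (simp add: algebra_simps)
  also have "\<dots> = sin (pi * s) * cos (pi * of_int (round t))"
    by (simp add: sin_add)
  finally have "\<bar>sin (pi * t)\<bar> = \<bar>sin (pi * s)\<bar>"
    using sin_cos_squared_add[of "pi * of_int (round t)"] by (simp add: abs_mult abs_square_eq_1)
  also have "\<bar>sin (pi * s)\<bar> = sin (pi * \<bar>s\<bar>)"
  proof (cases "s \<ge> 0")
    case True
    have "0 \<le> sin (pi * s)" using s True by (intro sin_ge_zero) auto
    thus ?thesis using True by simp
  next
    case False
    have "0 \<le> pi * (-s)" "pi * (-s) \<le> pi * 1"
      using s False by (intro mult_nonneg_nonneg mult_left_mono; simp)+
    hence "0 \<le> sin (pi * (-s))" by (intro sin_ge_zero) auto
    thus ?thesis using False by simp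
  qed
  also have "\<dots> \<ge> 2 * (pi * \<bar>s\<bar>) / pi"
    using s by (intro jordan_sin_ge) auto
  finally show ?thesis
    using \<open>dist_int t \<le> \<bar>s\<bar>\<close> by simp
qed

lemma dist_int_le_norm_e2pi_minus_1: "4 * dist_int t \<le> norm (e2pi t - 1)"
proof -
  have "norm (e2pi t - 1) ^ 2 = (cos (2*pi * t) - 1)^2 + (sin (2*pi * t))^2"
    by (simp add: e2pi_def cmod_def cis.ctr)
  also have "\<dots> = 4 * (sin (pi * t))^2"
    using cos_double_sin[of "pi * t"] by (simp add: power2_eq_square algebra_simps sin_squared_eq)
  finally have "norm (e2pi t - 1) = 2 * \<bar>sin (pi * t)\<bar>"
    by (metis abs_mult_self_eq abs_of_nonneg norm_ge_zero power2_eq_square real_sqrt_abs2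
        real_sqrt_mult real_sqrt_four abs_mult abs_numeral mult.assoc)
  thus ?thesis
    using dist_int_le_abs_sin_pi[of t] by simp
qed

lemma e2pi_eq_1_imp_Ints: "e2pi t = 1 \<Longrightarrow> t \<in> \<int>"
  using dist_int_le_norm_e2pi_minus_1[of t] dist_int_nonneg[of t]
  by (simp add: dist_int_eq_0_iff[symmetric])

lemma norm_sum_e2pi_interval_le:
  assumes "dist_int t > 0"
  shows "norm (\<Sum>k\<in>{M..<M+L::nat}. e2pi (real k * t)) \<le> 1 / (2 * dist_int t)"
proof -
  have ne: "e2pi t \<noteq> 1"
    using dist_int_le_norm_e2pi_minus_1[of t] assms by auto
  have "(\<Sum>k\<in>{M..<M+L}. e2pi (real k * t)) = (\<Sum>k<L. e2pi (real (M + k) * t))"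
    by (rule sum.reindex_bij_witness[of _ "\<lambda>k. k + M" "\<lambda>k. k - M"]) auto
  also have "\<dots> = e2pi (real M * t) * (\<Sum>k<L. e2pi t ^ k)"
    by (simp add: sum_distrib_left e2pi_power e2pi_add[symmetric] algebra_simps)
  also have "\<dots> = e2pi (real M * t) * ((e2pi t ^ L - 1) / (e2pi t - 1))"
    using geometric_sum[OF ne] by simp
  finally have "norm (\<Sum>k\<in>{M..<M+L}. e2pi (real k * t)) = norm (e2pi t ^ L - 1) / norm (e2pi t - 1)"
    by (simp add: norm_mult norm_divide)
  also have "\<dots> \<le> 2 / norm (e2pi t - 1)"
    using norm_triangle_ineq4[of "e2pi t ^ L" 1] by (intro divide_right_mono) (simp_all add: norm_power)
  also have "\<dots> \<le> 2 / (4 * dist_int t)"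
    using dist_int_le_norm_e2pi_minus_1[of t] assms by (intro divide_left_mono) (auto intro!: mult_pos_pos)
  finally show ?thesis by simp
qed

section \<open>The large sieve inequality\<close>

lemma dist_int_diff_lt_of_same_cell:
  assumes \<delta>: "\<delta> > 0" and side: "(frac x \<le> 1/2) = (frac y \<le> 1/2)"
    and cell: "\<lfloor>dist_int x / \<delta>\<rfloor> = \<lfloor>dist_int y / \<delta>\<rfloor>"
  shows "dist_int (x - y) < \<delta>"
proof -
  have dist_frac: "dist_int z = (if frac z \<le> 1/2 then frac z else 1 - frac z)" for z
    unfolding dist_int_def by auto
  have "\<bar>dist_int x / \<delta> - dist_int y / \<delta>\<bar> < 1"
    using cell by linarith
  hence "\<bar>dist_int x - dist_int y\<bar> < \<delta>"
    using \<delta> by (simp add: diff_divide_distrib[symmetric] abs_divide)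
  hence "\<bar>frac x - frac y\<bar> < \<delta>"
    using side dist_frac[of x] dist_frac[of y] by (auto split: if_splits)
  moreover have "x - y = (frac x - frac y) + of_int (\<lfloor>x\<rfloor> - \<lfloor>y\<rfloor>)"
    unfolding frac_def by simp
  hence "dist_int (x - y) = dist_int (frac x - frac y - of_int 0)"
    by (simp only: dist_int_add_of_int) simp
  ultimately show ?thesis
    using dist_int_le[of "frac x - frac y" 0] by simp
qed

lemma sum_inverse_dist_int_spaced_le:
  fixes \<alpha> :: "'a \<Rightarrow> real"
  assumes "finite S" and \<delta>: "\<delta> > 0"
    and spaced: "\<And>r s. r \<in> S \<Longrightarrow> s \<in> S \<Longrightarrow> r \<noteq> s \<Longrightarrow> \<delta> \<le> dist_int (\<alpha> r - \<alpha> s)"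
    and r: "r \<in> S"
  shows "(\<Sum>s\<in>S-{r}. 1 / dist_int (\<alpha> s - \<alpha> r)) \<le> (2/\<delta>) * harm (nat \<lfloor>1/(2*\<delta>)\<rfloor>)"
proof -
  define M where "M = nat \<lfloor>1/(2*\<delta>)\<rfloor>"
  define m where "m s = nat \<lfloor>dist_int (\<alpha> s - \<alpha> r) / \<delta>\<rfloor>" for s
  \<comment> \<open>On each side of \<open>\<alpha> r\<close> at most one point lies in each interval \<open>[m\<delta>, (m+1)\<delta>)\<close>.\<close>
  define key where "key s = (frac (\<alpha> s - \<alpha> r) \<le> 1/2, m s)" for s
  have m_ge: "1 \<le> m s" and m_le: "\<delta> * m s \<le> dist_int (\<alpha> s - \<alpha> r)" if "s \<in> S-{r}" for s
  proof -
    have "\<delta> \<le> dist_int (\<alpha> s - \<alpha> r)"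
      using spaced[of s r] that r by auto
    hence "1 \<le> dist_int (\<alpha> s - \<alpha> r) / \<delta>" using \<delta> by simp
    thus "1 \<le> m s" unfolding m_def by linarith
    have "real (m s) \<le> dist_int (\<alpha> s - \<alpha> r) / \<delta>"
      unfolding m_def using dist_int_nonneg \<delta> by (simp add: of_nat_nat)
    thus "\<delta> * m s \<le> dist_int (\<alpha> s - \<alpha> r)" using \<delta> by (simp add: field_simps)
  qed
  have m_le_M: "m s \<le> M" for s
  proof -
    have "dist_int (\<alpha> s - \<alpha> r) / \<delta> \<le> 1/(2*\<delta>)"
      using dist_int_le_half[of "\<alpha> s - \<alpha> r"] \<delta> by (simp add: field_simps)
    thus ?thesis unfolding m_def M_def by (intro nat_mono floor_mono)
  qed
  have inj: "inj_on key (S-{r})"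
  proof (rule inj_onI, rule ccontr)
    fix s s' assume s: "s \<in> S-{r}" and s': "s' \<in> S-{r}" and k: "key s = key s'" and ne: "s \<noteq> s'"
    have "\<lfloor>dist_int (\<alpha> s - \<alpha> r) / \<delta>\<rfloor> = \<lfloor>dist_int (\<alpha> s' - \<alpha> r) / \<delta>\<rfloor>"
      using k dist_int_nonneg \<delta> unfolding key_def m_def by (simp add: nat_eq_iff2)
    hence "dist_int ((\<alpha> s - \<alpha> r) - (\<alpha> s' - \<alpha> r)) < \<delta>"
      using k \<delta> unfolding key_def by (intro dist_int_diff_lt_of_same_cell) auto
    moreover have "\<delta> \<le> dist_int (\<alpha> s - \<alpha> s')"
      using spaced[of s s'] s s' ne by auto
    ultimately show False by simp
  qed
  have "(\<Sum>s\<in>S-{r}. 1 / dist_int (\<alpha> s - \<alpha> r)) \<le> (\<Sum>s\<in>S-{r}. 1 / (\<delta> * m s))"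
  proof (rule sum_mono)
    fix s assume s: "s \<in> S-{r}"
    have "0 < \<delta> * m s" using m_ge[OF s] \<delta> by simp
    thus "1 / dist_int (\<alpha> s - \<alpha> r) \<le> 1 / (\<delta> * m s)"
      using m_le[OF s] by (intro divide_left_mono) auto
  qed
  also have "\<dots> = (\<Sum>k\<in>key ` (S-{r}). 1 / (\<delta> * snd k))"
    using inj by (subst sum.reindex) (auto simp: key_def)
  also have "\<dots> \<le> (\<Sum>k\<in>(UNIV::bool set) \<times> {1..M}. 1 / (\<delta> * snd k))"
    using m_ge m_le_M \<delta> by (intro sum_mono2) (auto simp: key_def)
  also have "\<dots> = (2/\<delta>) * harm M"
    by (simp add: sum.cartesian_product' UNIV_bool harm_def sum_distrib_left field_simps)
  finally show ?thesis unfolding M_def .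
qed

lemma complex_of_real_sum_norm_sum_sq:
  fixes A :: "'a \<Rightarrow> complex" and \<alpha> :: "'a \<Rightarrow> real"
  shows "complex_of_real (\<Sum>k\<in>K. (norm (\<Sum>r\<in>R. A r * e2pi (real k * \<alpha> r)))^2)
       = (\<Sum>r\<in>R. \<Sum>s\<in>R. A r * cnj (A s) * (\<Sum>k\<in>K. e2pi (real k * (\<alpha> r - \<alpha> s))))"
proof -
  have sq: "complex_of_real ((norm (\<Sum>r\<in>R. A r * e2pi (real k * \<alpha> r)))^2)
      = (\<Sum>r\<in>R. \<Sum>s\<in>R. A r * cnj (A s) * e2pi (real k * (\<alpha> r - \<alpha> s)))" for k
  proof -
    have "complex_of_real ((norm (\<Sum>r\<in>R. A r * e2pi (real k * \<alpha> r)))^2)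
        = (\<Sum>r\<in>R. A r * e2pi (real k * \<alpha> r)) * cnj (\<Sum>r\<in>R. A r * e2pi (real k * \<alpha> r))"
      by (rule complex_norm_square)
    also have "\<dots> = (\<Sum>r\<in>R. \<Sum>s\<in>R. (A r * e2pi (real k * \<alpha> r)) * (cnj (A s) * e2pi (- (real k * \<alpha> s))))"
      by (simp add: cnj_sum sum_product cnj_e2pi)
    also have "\<dots> = (\<Sum>r\<in>R. \<Sum>s\<in>R. A r * cnj (A s) * e2pi (real k * (\<alpha> r - \<alpha> s)))"
      by (intro sum.cong refl) (simp add: e2pi_add[symmetric] right_diff_distrib algebra_simps)
    finally show ?thesis .
  qed
  have "complex_of_real (\<Sum>k\<in>K. (norm (\<Sum>r\<in>R. A r * e2pi (real k * \<alpha> r)))^2)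
      = (\<Sum>k\<in>K. \<Sum>r\<in>R. \<Sum>s\<in>R. A r * cnj (A s) * e2pi (real k * (\<alpha> r - \<alpha> s)))"
    unfolding of_real_sum by (rule sum.cong[OF refl sq])
  also have "\<dots> = (\<Sum>r\<in>R. \<Sum>s\<in>R. \<Sum>k\<in>K. A r * cnj (A s) * e2pi (real k * (\<alpha> r - \<alpha> s)))"
    by (subst sum.swap) (simp add: sum.swap[of _ K])
  finally show ?thesis
    by (simp add: sum_distrib_left)
qed

lemma sum_off_diagonal_le:
  fixes a :: "'a \<Rightarrow> real" and w :: "'a \<Rightarrow> 'a \<Rightarrow> real"
  assumes "finite R" and w_sym: "\<And>r s. w r s = w s r" and w_nonneg: "\<And>r s. 0 \<le> w r s"
  shows "(\<Sum>r\<in>R. \<Sum>s\<in>R-{r}. a r * a s * w r s) \<le> (\<Sum>r\<in>R. (a r)^2 * (\<Sum>s\<in>R-{r}. w r s))"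
proof -
  have swap: "(\<Sum>r\<in>R. \<Sum>s\<in>R-{r}. F r s) = (\<Sum>s\<in>R. \<Sum>r\<in>R-{s}. F r s)" for F :: "'a \<Rightarrow> 'a \<Rightarrow> real"
  proof -
    have "(\<Sum>r\<in>R. \<Sum>s\<in>R-{r}. F r s) = (\<Sum>(r,s)\<in>{(r,s). r \<in> R \<and> s \<in> R \<and> r \<noteq> s}. F r s)"
      using \<open>finite R\<close> by (subst sum.Sigma) (auto intro!: sum.cong)
    also have "\<dots> = (\<Sum>s\<in>R. \<Sum>r\<in>R-{s}. F r s)"
      using \<open>finite R\<close> by (subst sum.Sigma) (auto intro!: sum.reindex_bij_witness[of _ prod.swap prod.swap])
    finally show ?thesis .
  qed
  have "(\<Sum>r\<in>R. \<Sum>s\<in>R-{r}. a r * a s * w r s)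
      \<le> (\<Sum>r\<in>R. \<Sum>s\<in>R-{r}. ((a r)^2 * w r s + (a s)^2 * w r s) / 2)"
  proof (intro sum_mono)
    fix r s
    have "2 * (a r * a s) \<le> (a r)^2 + (a s)^2"
      using sum_squares_bound[of "a r" "a s"] by (simp add: power2_eq_square)
    from mult_right_mono[OF this w_nonneg[of r s]]
    show "a r * a s * w r s \<le> ((a r)^2 * w r s + (a s)^2 * w r s) / 2"
      by (simp add: algebra_simps)
  qed
  also have "\<dots> = ((\<Sum>r\<in>R. \<Sum>s\<in>R-{r}. (a r)^2 * w r s) + (\<Sum>r\<in>R. \<Sum>s\<in>R-{r}. (a s)^2 * w r s)) / 2"
    by (simp add: sum.distrib sum_divide_distrib add_divide_distrib)
  also have "(\<Sum>r\<in>R. \<Sum>s\<in>R-{r}. (a s)^2 * w r s) = (\<Sum>r\<in>R. \<Sum>s\<in>R-{r}. (a r)^2 * w r s)"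
    by (subst swap) (simp add: w_sym)
  finally have "(\<Sum>r\<in>R. \<Sum>s\<in>R-{r}. a r * a s * w r s) \<le> (\<Sum>r\<in>R. \<Sum>s\<in>R-{r}. (a r)^2 * w r s)"
    by (simp add: field_simps)
  thus ?thesis
    by (simp add: sum_distrib_left)
qed

lemma large_sieve:
  fixes R :: "'a set" and \<alpha> :: "'a \<Rightarrow> real" and A :: "'a \<Rightarrow> complex"
  assumes fin: "finite R" and \<delta>: "\<delta> > 0"
    and spaced: "\<And>r s. r \<in> R \<Longrightarrow> s \<in> R \<Longrightarrow> r \<noteq> s \<Longrightarrow> \<delta> \<le> dist_int (\<alpha> r - \<alpha> s)"
  shows "(\<Sum>k\<in>{M..<M+L}. (norm (\<Sum>r\<in>R. A r * e2pi (real k * \<alpha> r)))^2)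
          \<le> (real L + harm (nat \<lfloor>1/(2*\<delta>)\<rfloor>) / \<delta>) * (\<Sum>r\<in>R. (norm (A r))^2)"
proof -
  define E where "E t = (\<Sum>k\<in>{M..<M+L}. e2pi (real k * t))" for t
  define H :: real where "H = harm (nat \<lfloor>1/(2*\<delta>)\<rfloor>)"
  define a where "a r = norm (A r)" for r
  define w where "w r s = 1 / (2 * dist_int (\<alpha> r - \<alpha> s))" for r s
  have w_sym: "w r s = w s r" for r s
    unfolding w_def by (simp add: dist_int_commute)
  have w_nonneg: "0 \<le> w r s" for r s
    unfolding w_def using dist_int_nonneg by simp
  have "(\<Sum>k\<in>{M..<M+L}. (norm (\<Sum>r\<in>R. A r * e2pi (real k * \<alpha> r)))^2)
      = norm (\<Sum>r\<in>R. \<Sum>s\<in>R. A r * cnj (A s) * E (\<alpha> r - \<alpha> s))"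
    unfolding E_def complex_of_real_sum_norm_sum_sq[symmetric] norm_of_real
    by (simp add: sum_nonneg)
  also have "\<dots> \<le> (\<Sum>r\<in>R. \<Sum>s\<in>R. a r * a s * norm (E (\<alpha> r - \<alpha> s)))"
    unfolding a_def
    by (rule order.trans[OF norm_sum sum_mono], rule order.trans[OF norm_sum sum_mono])
       (simp add: norm_mult)
  also have "\<dots> = (\<Sum>r\<in>R. real L * (a r)^2 + (\<Sum>s\<in>R-{r}. a r * a s * norm (E (\<alpha> r - \<alpha> s))))"
    using fin e2pi_of_int[of 0] by (intro sum.cong refl) (simp add: sum.remove E_def power2_eq_square norm_mult)
  also have "\<dots> \<le> (\<Sum>r\<in>R. real L * (a r)^2 + (\<Sum>s\<in>R-{r}. a r * a s * w r s))"
  proof (intro sum_mono add_left_mono mult_left_mono)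
    fix r s assume "r \<in> R" "s \<in> R - {r}"
    hence "0 < dist_int (\<alpha> r - \<alpha> s)"
      using spaced[of r s] \<delta> by auto
    thus "norm (E (\<alpha> r - \<alpha> s)) \<le> w r s"
      unfolding E_def w_def by (rule norm_sum_e2pi_interval_le)
  qed (simp add: a_def)
  also have "\<dots> \<le> real L * (\<Sum>r\<in>R. (a r)^2) + (\<Sum>r\<in>R. (a r)^2 * (\<Sum>s\<in>R-{r}. w r s))"
    using sum_off_diagonal_le[OF fin w_sym w_nonneg, of a] by (simp add: sum.distrib sum_distrib_left)
  also have "\<dots> \<le> real L * (\<Sum>r\<in>R. (a r)^2) + (\<Sum>r\<in>R. (a r)^2 * (H / \<delta>))"
  proof (intro add_left_mono sum_mono mult_left_mono)
    fix r assume r: "r \<in> R"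
    have "(\<Sum>s\<in>R-{r}. w r s) = (\<Sum>s\<in>R-{r}. 1 / dist_int (\<alpha> s - \<alpha> r)) / 2"
      unfolding w_def sum_divide_distrib by (simp add: dist_int_commute ac_simps)
    also have "\<dots> \<le> ((2/\<delta>) * H) / 2"
      unfolding H_def by (intro divide_right_mono sum_inverse_dist_int_spaced_le[OF fin \<delta> spaced r]) auto
    finally show "(\<Sum>s\<in>R-{r}. w r s) \<le> H / \<delta>" by simp
  qed simp
  also have "\<dots> = (real L + H / \<delta>) * (\<Sum>r\<in>R. (a r)^2)"
    by (simp add: sum_distrib_left sum_distrib_right sum.distrib algebra_simps)
  finally show ?thesis
    unfolding H_def a_def .
qed

section \<open>Expansion of the divisor deviation over Farey fractions\<close>

lemma sum_e2pi_roots_of_unity: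
  assumes d: "d > 0"
  shows "(\<Sum>a<d. e2pi (real a * real m / real d)) = (if d dvd m then of_nat d else 0)"
proof -
  define z where "z = e2pi (real m / real d)"
  have za: "e2pi (real a * real m / real d) = z ^ a" for a
    unfolding z_def e2pi_power by simp
  have zd: "z ^ d = 1"
    unfolding z_def e2pi_power using d by (simp add: e2pi_of_int[of "int m", simplified])
  show ?thesis
  proof (cases "d dvd m")
    case True
    then obtain c where "m = d * c" by blast
    hence "real m / real d = of_int (int c)" using d by simp
    hence "z = 1" unfolding z_def by (simp only: e2pi_of_int)
    thus ?thesis using True by (simp add: za)
  next
    case False
    have "z \<noteq> 1"
    proof
      assume "z = 1"
      hence "real m / real d \<in> \<int>"
        unfolding z_def by (rule e2pi_eq_1_imp_Ints)
      hence e: "real m / real d = of_int \<lfloor>real m / real d\<rfloor>"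
        by (metis Ints_cases floor_of_int)
      have "real m = real d * of_int \<lfloor>real m / real d\<rfloor>"
        using d by (subst e[symmetric]) simp
      hence "int m = int d * \<lfloor>real m / real d\<rfloor>"
        by (metis of_int_eq_iff of_int_mult of_int_of_nat_eq)
      hence "int d dvd int m" by simp
      thus False using False by simp
    qed
    thus ?thesis using False zd by (simp add: za geometric_sum)
  qed
qed

lemma dvd_deviation_e2pi_expansion:
  fixes \<psi> :: "nat \<Rightarrow> real"
  assumes d: "d > 0"
  shows "complex_of_real ((\<Sum>i<L. \<psi> i * of_bool (d dvd m + i)) - (\<Sum>i<L. \<psi> i) / real d)
    = (\<Sum>a\<in>{1..<d}. e2pi (real a * real m / real d) *
          ((1 / of_nat d) * (\<Sum>i<L. of_real (\<psi> i) * e2pi (real a * real i / real d))))"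
proof -
  have filter: "complex_of_real (of_bool (d dvd m + i)) = (1 / of_nat d) * (\<Sum>a<d. e2pi (real a * real (m + i) / real d))" for i
    using sum_e2pi_roots_of_unity[OF d, of "m+i"] d by simp
  have split_0: "(\<Sum>a<d. F a) = F 0 + (\<Sum>a\<in>{1..<d}. F a)" for F :: "nat \<Rightarrow> complex"
  proof -
    have "{..<d} = insert 0 {1..<d}" using d by auto
    thus ?thesis by simp
  qed
  have "complex_of_real (\<Sum>i<L. \<psi> i * of_bool (d dvd m + i))
      = (\<Sum>i<L. of_real (\<psi> i) * ((1 / of_nat d) * (\<Sum>a<d. e2pi (real a * real (m + i) / real d))))"
    unfolding of_real_sum of_real_mult by (rule sum.cong[OF refl]) (simp only: filter)
  also have "\<dots> = (\<Sum>a<d. \<Sum>i<L. of_real (\<psi> i) * ((1 / of_nat d) * e2pi (real a * real (m + i) / real d)))"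
    by (simp add: sum_distrib_left sum.swap[of _ "{..<d}"])
  \<comment> \<open>The \<open>a = 0\<close> term is the expected value \<open>(\<Sum>\<^sub>i \<psi>\<^sub>i) / d\<close>.\<close>
  also have "\<dots> = (\<Sum>i<L. of_real (\<psi> i) * (1 / of_nat d)) +
      (\<Sum>a\<in>{1..<d}. \<Sum>i<L. of_real (\<psi> i) * ((1 / of_nat d) * e2pi (real a * real (m + i) / real d)))"
    by (subst split_0) (simp add: e2pi_of_int[of 0, simplified])
  also have "(\<Sum>a\<in>{1..<d}. \<Sum>i<L. of_real (\<psi> i) * ((1 / of_nat d) * e2pi (real a * real (m + i) / real d)))
     = (\<Sum>a\<in>{1..<d}. e2pi (real a * real m / real d) *
          ((1 / of_nat d) * (\<Sum>i<L. of_real (\<psi> i) * e2pi (real a * real i / real d))))"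
  proof (rule sum.cong[OF refl])
    fix a
    have "e2pi (real a * real (m + i) / real d) = e2pi (real a * real m / real d) * e2pi (real a * real i / real d)" for i
      by (simp add: e2pi_add[symmetric] add_divide_distrib distrib_left)
    thus "(\<Sum>i<L. of_real (\<psi> i) * ((1 / of_nat d) * e2pi (real a * real (m + i) / real d))) =
       e2pi (real a * real m / real d) * ((1 / of_nat d) * (\<Sum>i<L. of_real (\<psi> i) * e2pi (real a * real i / real d)))"
      by (simp add: sum_distrib_left algebra_simps)
  qed
  finally show ?thesis by (simp add: sum_divide_distrib)
qed

definition farey_pairs :: "nat \<Rightarrow> (nat \<times> nat) set" where
  "farey_pairs Q = {(q,b). 1 \<le> q \<and> q \<le> Q \<and> 1 \<le> b \<and> b < q \<and> coprime b q}"

lemma finite_farey_pairs: "finite (farey_pairs Q)"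
  by (rule finite_subset[of _ "{1..Q} \<times> {1..Q}"]) (auto simp: farey_pairs_def)

lemma bij_betw_reduced_fractions:
  "bij_betw (\<lambda>((q,b),t). (q*t, b*t))
     (SIGMA (q,b):farey_pairs Q. {1..Q div q}) (SIGMA d:{1..Q}. {1..<d})"
proof -
  define scale :: "(nat \<times> nat) \<times> nat \<Rightarrow> nat \<times> nat" where "scale = (\<lambda>((q,b),t). (q*t, b*t))"
  define reduce where "reduce = (\<lambda>(d::nat,a::nat). ((d div gcd a d, a div gcd a d), gcd a d))"
  have expand: "reduce (scale ((q,b),t)) = ((q,b),t) \<and> scale ((q,b),t) \<in> (SIGMA d:{1..Q}. {1..<d})"
    if qb: "(q,b) \<in> farey_pairs Q" and t: "t \<in> {1..Q div q}" for q b t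
  proof -
    have cop: "coprime b q" and q: "1 \<le> q" "q \<le> Q" and b: "1 \<le> b" "b < q"
      using qb by (auto simp: farey_pairs_def)
    have "gcd (b*t) (q*t) = t"
      using cop by (metis coprime_iff_gcd_eq_1 gcd_mult_distrib_nat mult.commute mult_1_right)
    moreover have "1 \<le> t" "q * t \<le> Q"
      using t q by (auto simp: less_eq_div_iff_mult_less_eq mult.commute)
    ultimately show ?thesis
      using q b by (auto simp: reduce_def scale_def mult_le_mono)
  qed
  have reduce: "scale (reduce (d,a)) = (d,a) \<and>
      reduce (d,a) \<in> (SIGMA (q,b):farey_pairs Q. {1..Q div q})"
    if d: "d \<in> {1..Q}" and a: "a \<in> {1..<d}" for d a
  proof -
    define g where "g = gcd a d"
    have dd: "d div g * g = d" "a div g * g = a"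
      unfolding g_def by simp_all
    have cop: "coprime (a div g) (d div g)"
      unfolding g_def using a by (intro div_gcd_coprime) auto
    have lt: "a div g < d div g"
      using dd a by (metis atLeastLessThan_iff mult_le_mono1 not_le)
    have "1 \<le> a div g"
      using dd(2) a by (cases "a div g = 0") auto
    moreover have "d div g \<le> Q"
      using d by (auto intro: le_trans[OF div_le_dividend])
    moreover have "g \<le> Q div (d div g)"
      using lt dd d by (simp add: less_eq_div_iff_mult_less_eq mult.commute)
    moreover have "1 \<le> g"
      using a unfolding g_def by (simp add: Suc_le_eq)
    ultimately show ?thesis
      using cop lt dd by (simp add: farey_pairs_def reduce_def scale_def g_def[symmetric])
  qed
  have "bij_betw scale (SIGMA (q,b):farey_pairs Q. {1..Q div q}) (SIGMA d:{1..Q}. {1..<d})"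
  proof (rule bij_betw_byWitness[where f' = reduce], goal_cases)
    case 1 show ?case using expand by clarsimp
  next
    case 2 show ?case using reduce by clarsimp
  next
    case 3 show ?case using expand by (auto simp: image_subset_iff)
  next
    case 4 show ?case using reduce by (auto simp: image_subset_iff)
  qed
  thus ?thesis unfolding scale_def .
qed

lemma sum_fractions_reduced:
  fixes F :: "nat \<Rightarrow> nat \<Rightarrow> 'b::comm_monoid_add"
  shows "(\<Sum>d\<in>{1..Q}. \<Sum>a\<in>{1..<d}. F d a) = (\<Sum>(q,b)\<in>farey_pairs Q. \<Sum>t\<in>{1..Q div q}. F (q*t) (b*t))"
proof -
  have "(\<Sum>d\<in>{1..Q}. \<Sum>a\<in>{1..<d}. F d a) = (\<Sum>(d,a)\<in>(SIGMA d:{1..Q}. {1..<d}). F d a)"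
    by (rule sum.Sigma) auto
  also have "\<dots> = (\<Sum>((q,b),t)\<in>(SIGMA (q,b):farey_pairs Q. {1..Q div q}). F (q*t) (b*t))"
    by (subst sum.reindex_bij_betw[OF bij_betw_reduced_fractions, symmetric]) (auto intro!: sum.cong)
  also have "\<dots> = (\<Sum>(q,b)\<in>farey_pairs Q. \<Sum>t\<in>{1..Q div q}. F (q*t) (b*t))"
    by (subst sum.Sigma[symmetric]) (auto simp: finite_farey_pairs split_beta)
  finally show ?thesis .
qed

text \<open>
  \<open>\<Sum>\<^sub>i\<^sub><\<^sub>L \<psi>\<^sub>i f(m+i)\<close> minus its expected value, for \<open>f = g * 1\<close> with \<open>g\<close> supported on \<open>[1, Q]\<close>.
\<close>
definition dvd_deviation :: "nat \<Rightarrow> (nat \<Rightarrow> real) \<Rightarrow> (nat \<Rightarrow> real) \<Rightarrow> nat \<Rightarrow> nat \<Rightarrow> real" where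
  "dvd_deviation Q g \<psi> L m =
     (\<Sum>d\<in>{1..Q}. g d * ((\<Sum>i<L. \<psi> i * of_bool (d dvd m + i)) - (\<Sum>i<L. \<psi> i) / real d))"

definition farey_weight :: "(nat \<Rightarrow> real) \<Rightarrow> nat \<Rightarrow> nat \<Rightarrow> real" where
  "farey_weight g Q q = (\<Sum>t\<in>{1..Q div q}. g (q*t) / real t)"

definition window_coeff :: "(nat \<Rightarrow> real) \<Rightarrow> nat \<Rightarrow> nat \<Rightarrow> nat \<Rightarrow> complex" where
  "window_coeff \<psi> L q b = (1 / of_nat q) * (\<Sum>i<L. of_real (\<psi> i) * e2pi (real b * real i / real q))"

lemma dvd_deviation_farey_expansion:
  "complex_of_real (dvd_deviation Q g \<psi> L m)
     = (\<Sum>(q,b)\<in>farey_pairs Q.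
          of_real (farey_weight g Q q) * window_coeff \<psi> L q b * e2pi (real m * (real b / real q)))"
proof -
  define F where "F d a = of_real (g d) * (e2pi (real a * real m / real d) *
          ((1 / of_nat d) * (\<Sum>i<L. of_real (\<psi> i) * e2pi (real a * real i / real d))))" for d a
  have "complex_of_real (dvd_deviation Q g \<psi> L m) = (\<Sum>d\<in>{1..Q}. \<Sum>a\<in>{1..<d}. F d a)"
    unfolding dvd_deviation_def of_real_sum
  proof (rule sum.cong[OF refl])
    fix d assume "d \<in> {1..Q}"
    hence d: "d > 0" by simp
    show "complex_of_real (g d * ((\<Sum>i<L. \<psi> i * of_bool (d dvd m + i)) - (\<Sum>i<L. \<psi> i) / real d))
       = (\<Sum>a\<in>{1..<d}. F d a)"
      unfolding of_real_mult dvd_deviation_e2pi_expansion[OF d] F_def by (simp add: sum_distrib_left)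
  qed
  also have "\<dots> = (\<Sum>(q,b)\<in>farey_pairs Q. \<Sum>t\<in>{1..Q div q}. F (q*t) (b*t))"
    by (rule sum_fractions_reduced)
  also have "\<dots> = (\<Sum>(q,b)\<in>farey_pairs Q.
          of_real (farey_weight g Q q) * window_coeff \<psi> L q b * e2pi (real m * (real b / real q)))"
  proof (rule sum.cong[OF refl], clarify)
    fix q b assume "(q,b) \<in> farey_pairs Q"
    hence q: "q > 0" by (auto simp: farey_pairs_def)
    have "F (q*t) (b*t) = of_real (g (q*t) / real t) * window_coeff \<psi> L q b * e2pi (real m * (real b / real q))"
      if t: "t \<in> {1..Q div q}" for t
    proof -
      have t0: "real t > 0" using t by simp
      have "real (b*t) * real m / real (q*t) = real m * (real b / real q)"
           "real (b*t) * real i / real (q*t) = real b * real i / real q" for i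
        using t0 q by (simp_all add: field_simps)
      thus ?thesis
        unfolding F_def window_coeff_def using t0 q by (simp add: field_simps)
    qed
    thus "(\<Sum>t\<in>{1..Q div q}. F (q*t) (b*t))
        = of_real (farey_weight g Q q) * window_coeff \<psi> L q b * e2pi (real m * (real b / real q))"
      by (simp add: farey_weight_def of_real_sum sum_distrib_right)
  qed
  finally show ?thesis .
qed

section \<open>The coefficients of the Farey expansion\<close>

lemma farey_pairs_cross_ne:
  assumes r: "(q,b) \<in> farey_pairs Q" and s: "(q',b') \<in> farey_pairs Q" and ne: "(q,b) \<noteq> (q',b')"
  shows "int b * int q' - int b' * int q \<noteq> n * (int q * int q')"
proof
  assume eq: "int b * int q' - int b' * int q = n * (int q * int q')"
  from r have q: "1 \<le> q" "1 \<le> b" "b < q" "coprime b q" by (auto simp: farey_pairs_def)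
  from s have q': "1 \<le> q'" "1 \<le> b'" "b' < q'" "coprime b' q'" by (auto simp: farey_pairs_def)
  have "int b * int q' < int q * int q'" "int b' * int q < int q * int q'"
       "0 < int b * int q'" "0 < int b' * int q"
    using q q' by (simp_all add: mult.commute)
  hence "\<bar>int b * int q' - int b' * int q\<bar> < int q * int q'"
    by linarith
  hence "\<bar>n\<bar> * (int q * int q') < 1 * (int q * int q')"
    using eq by (simp add: abs_mult)
  hence "n = 0"
    using q q' by (simp only: mult_less_cancel_right) simp
  hence bb: "b * q' = b' * q"
    using eq by (simp add: of_nat_mult[symmetric] del: of_nat_mult)
  have "q dvd b * q'" "q' dvd b' * q"
    using bb by (simp, metis dvd_triv_right)
  hence "q dvd q'" "q' dvd q"
    using q(4) q'(4) by (metis coprime_commute coprime_dvd_mult_right_iff)+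
  hence "q = q'"
    by (simp add: dvd_antisym)
  moreover hence "b = b'"
    using bb q by simp
  ultimately show False
    using ne by simp
qed

lemma farey_pairs_spaced:
  assumes r: "(q,b) \<in> farey_pairs Q" and s: "(q',b') \<in> farey_pairs Q" and ne: "(q,b) \<noteq> (q',b')"
  shows "1 / (real Q)^2 \<le> dist_int (real b / real q - real b' / real q')"
proof (rule dist_int_greatest)
  fix n :: int
  from r have q: "1 \<le> q" "q \<le> Q" by (auto simp: farey_pairs_def)
  from s have q': "1 \<le> q'" "q' \<le> Q" by (auto simp: farey_pairs_def)
  define k :: int where "k = int b * int q' - int b' * int q - n * (int q * int q')"
  have qq: "real q * real q' > 0"
    using q q' by simp
  have eq: "real b / real q - real b' / real q' - of_int n = of_int k / (real q * real q')"
    unfolding k_def using q q' by (simp add: field_simps)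
  have "k \<noteq> 0"
    using farey_pairs_cross_ne[OF r s ne, of n] unfolding k_def by simp
  hence "1 \<le> \<bar>of_int k :: real\<bar>"
    by linarith
  have "1 / (real Q)^2 \<le> 1 / (real q * real q')"
    using q q' qq by (intro divide_left_mono) (auto simp: power2_eq_square mult_mono)
  also have "\<dots> \<le> \<bar>of_int k\<bar> / (real q * real q')"
    using \<open>1 \<le> \<bar>of_int k :: real\<bar>\<close> qq by (simp add: divide_right_mono)
  also have "\<dots> = \<bar>real b / real q - real b' / real q' - of_int n\<bar>"
    unfolding eq using qq by (simp add: abs_divide)
  finally show "1 / (real Q)^2 \<le> \<bar>real b / real q - real b' / real q' - of_int n\<bar>" .
qed

lemma dist_int_fraction:
  assumes "1 \<le> b" "b < q"
  shows "dist_int (real b / real q) = min (real b / real q) (1 - real b / real q)"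
proof -
  have "frac (real b / real q) = real b / real q" using assms by (simp add: frac_eq)
  thus ?thesis unfolding dist_int_def by simp
qed

lemma sum_inverse_dist_int_fractions_le:
  assumes q: "q \<ge> 1"
  shows "(\<Sum>b\<in>{1..<q}. 1 / dist_int (real b / real q)) \<le> 2 * real q * harm q"
proof -
  have "(\<Sum>b\<in>{1..<q}. 1 / dist_int (real b / real q)) \<le> (\<Sum>b\<in>{1..<q}. real q / real b + real q / real (q - b))"
  proof (rule sum_mono)
    fix b assume b: "b \<in> {1..<q}"
    have bq: "real b < real q" "1 \<le> real b" using b by auto
    have qb: "real (q - b) = real q - real b" using b by simp
    show "1 / dist_int (real b / real q) \<le> real q / real b + real q / real (q - b)"
    proof (cases "real b / real q \<le> 1 - real b / real q")
      case True
      hence "dist_int (real b / real q) = real b / real q" using b by (simp add: dist_int_fraction)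
      moreover have "0 \<le> real q / real (q - b)" by simp
      ultimately show ?thesis by simp
    next
      case False
      hence "dist_int (real b / real q) = 1 - real b / real q" using b by (simp add: dist_int_fraction)
      also have "\<dots> = real (q - b) / real q" using qb bq by (simp add: field_simps)
      finally have "1 / dist_int (real b / real q) = real q / real (q - b)" by simp
      moreover have "0 \<le> real q / real b" by simp
      ultimately show ?thesis by simp
    qed
  qed
  also have "\<dots> = (\<Sum>b\<in>{1..<q}. real q / real b) + (\<Sum>b\<in>{1..<q}. real q / real (q - b))"
    by (simp add: sum.distrib)
  also have "(\<Sum>b\<in>{1..<q}. real q / real (q - b)) = (\<Sum>b\<in>{1..<q}. real q / real b)"
    by (rule sum.reindex_bij_witness[of _ "\<lambda>b. q - b" "\<lambda>b. q - b"]) auto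
  also have "(\<Sum>b\<in>{1..<q}. real q / real b) \<le> (\<Sum>b\<in>{1..q}. real q / real b)"
    by (rule sum_mono2) auto
  also have "(\<Sum>b\<in>{1..q}. real q / real b) = real q * harm q"
    by (simp add: harm_def sum_distrib_left divide_inverse)
  finally show ?thesis by (simp add: algebra_simps)
qed

lemma dist_int_fraction_pos: "1 \<le> b \<Longrightarrow> b < q \<Longrightarrow> 0 < dist_int (real b / real q)"
  by (simp add: dist_int_fraction)

lemma norm_window_coeff_sq_le:
  assumes \<psi>_low: "\<And>i. i < h \<Longrightarrow> \<psi> i = e1" and \<psi>_high: "\<And>i. h \<le> i \<Longrightarrow> i < 2*h \<Longrightarrow> \<psi> i = e2"
    and e: "\<bar>e1\<bar> \<le> 1" "\<bar>e2\<bar> \<le> 1" and b: "1 \<le> b" "b < q"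
  shows "(norm (window_coeff \<psi> (2*h) q b))^2 \<le> 2 * real h / ((real q)^2 * dist_int (real b / real q))"
proof -
  define \<beta> where "\<beta> = real b / real q"
  define S where "S = (\<Sum>i<2*h. of_real (\<psi> i) * e2pi (real b * real i / real q))"
  have dp: "0 < dist_int \<beta>" unfolding \<beta>_def using b by (rule dist_int_fraction_pos)
  have e2pi_eq: "e2pi (real b * real i / real q) = e2pi (real i * \<beta>)" for i unfolding \<beta>_def by (simp add: mult.commute)
  have S1: "norm S \<le> 2 * real h"
  proof -
    have "norm S \<le> (\<Sum>i<2*h. norm (of_real (\<psi> i) * e2pi (real b * real i / real q)))"
      unfolding S_def by (rule norm_sum)
    also have "\<dots> \<le> (\<Sum>i<2*h. 1)"
    proof (rule sum_mono)
      fix i assume "i \<in> {..<2*h}"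
      hence "\<bar>\<psi> i\<bar> \<le> 1" using \<psi>_low[of i] \<psi>_high[of i] e by (cases "i < h") auto
      thus "norm (of_real (\<psi> i) * e2pi (real b * real i / real q)) \<le> 1" by (simp add: norm_mult)
    qed
    finally show ?thesis by simp
  qed
  have split: "{..<2*h} = {0..<0+h} \<union> {h..<h+h}" by auto
  have "S = (\<Sum>i\<in>{0..<0+h}. of_real (\<psi> i) * e2pi (real i * \<beta>)) + (\<Sum>i\<in>{h..<h+h}. of_real (\<psi> i) * e2pi (real i * \<beta>))"
    unfolding S_def split e2pi_eq by (subst sum.union_disjoint) auto
  also have "\<dots> = of_real e1 * (\<Sum>i\<in>{0..<0+h}. e2pi (real i * \<beta>)) + of_real e2 * (\<Sum>i\<in>{h..<h+h}. e2pi (real i * \<beta>))"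
    using \<psi>_low \<psi>_high by (simp add: sum_distrib_left)
  finally have "norm S \<le> \<bar>e1\<bar> * norm (\<Sum>i\<in>{0..<0+h}. e2pi (real i * \<beta>)) + \<bar>e2\<bar> * norm (\<Sum>i\<in>{h..<h+h}. e2pi (real i * \<beta>))"
    by (metis norm_mult norm_of_real norm_triangle_ineq)
  also have "\<dots> \<le> 1 * (1 / (2 * dist_int \<beta>)) + 1 * (1 / (2 * dist_int \<beta>))"
    by (intro add_mono mult_mono e norm_sum_e2pi_interval_le dp) auto
  finally have S2: "norm S \<le> 1 / dist_int \<beta>" by simp
  have "(norm S)^2 \<le> (2 * real h) * (1 / dist_int \<beta>)"
    unfolding power2_eq_square by (intro mult_mono S1 S2) auto
  moreover have "window_coeff \<psi> (2*h) q b = S / of_nat q" unfolding window_coeff_def S_def by simp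
  ultimately have "(norm (window_coeff \<psi> (2*h) q b))^2 = (norm S)^2 / (real q)^2"
    by (simp add: norm_divide power_divide)
  also have "\<dots> \<le> ((2 * real h) * (1 / dist_int \<beta>)) / (real q)^2"
    using \<open>(norm S)^2 \<le> _\<close> by (rule divide_right_mono) simp
  finally show ?thesis unfolding \<beta>_def by (simp add: mult.commute)
qed

lemma abs_farey_weight_le:
  assumes g: "\<And>d. 1 \<le> d \<Longrightarrow> d \<le> Q \<Longrightarrow> \<bar>g d\<bar> \<le> Gb" and q: "1 \<le> q" and Gb: "0 \<le> Gb"
  shows "\<bar>farey_weight g Q q\<bar> \<le> Gb * harm Q"
proof -
  have "\<bar>farey_weight g Q q\<bar> \<le> (\<Sum>t\<in>{1..Q div q}. \<bar>g (q*t) / real t\<bar>)" unfolding farey_weight_def by (rule sum_abs)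
  also have "\<dots> \<le> (\<Sum>t\<in>{1..Q div q}. Gb * inverse (real t))"
  proof (rule sum_mono)
    fix t assume t: "t \<in> {1..Q div q}"
    hence "q * t \<le> Q" using q by (simp add: less_eq_div_iff_mult_less_eq mult.commute)
    moreover have "1 \<le> q * t" using q t by simp
    ultimately have "\<bar>g (q*t)\<bar> \<le> Gb" using g by blast
    thus "\<bar>g (q*t) / real t\<bar> \<le> Gb * inverse (real t)" using t
      by (simp add: divide_inverse abs_mult mult_right_mono)
  qed
  also have "\<dots> = Gb * harm (Q div q)" by (simp add: harm_def sum_distrib_left)
  also have "\<dots> \<le> Gb * harm Q"
  proof (rule mult_left_mono)
    show "harm (Q div q) \<le> (harm Q :: real)" by (rule harm_mono) simp
    show "0 \<le> Gb" by (rule Gb)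
  qed
  finally show ?thesis .
qed

lemma norm_farey_coeff_sq_le:
  assumes g: "\<And>d. 1 \<le> d \<Longrightarrow> d \<le> Q \<Longrightarrow> \<bar>g d\<bar> \<le> Gb" and Gb: "0 \<le> Gb"
    and \<psi>_low: "\<And>i. i < h \<Longrightarrow> \<psi> i = e1" and \<psi>_high: "\<And>i. h \<le> i \<Longrightarrow> i < 2*h \<Longrightarrow> \<psi> i = e2"
    and e: "\<bar>e1\<bar> \<le> 1" "\<bar>e2\<bar> \<le> 1" and qb: "(q,b) \<in> farey_pairs Q"
  shows "(norm (of_real (farey_weight g Q q) * window_coeff \<psi> (2*h) q b))^2
     \<le> (Gb * harm Q)^2 * (2 * real h / ((real q)^2 * dist_int (real b / real q)))"
proof -
  have q: "1 \<le> q" and b: "1 \<le> b" "b < q"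
    using qb by (auto simp: farey_pairs_def)
  have "\<bar>farey_weight g Q q\<bar> \<le> \<bar>Gb * harm Q\<bar>"
    using abs_farey_weight_le[where g=g and Q=Q, OF g q Gb] Gb harm_nonneg[of Q] by simp
  hence "(farey_weight g Q q)^2 \<le> (Gb * harm Q)^2"
    by (simp only: abs_le_square_iff)
  hence "(farey_weight g Q q)^2 * (norm (window_coeff \<psi> (2*h) q b))^2
      \<le> (Gb * harm Q)^2 * (2 * real h / ((real q)^2 * dist_int (real b / real q)))"
    by (rule mult_mono[OF _ norm_window_coeff_sq_le[OF \<psi>_low \<psi>_high e b]]) simp_all
  thus ?thesis
    by (simp add: norm_mult power_mult_distrib)
qed

lemma sum_farey_coeff_sq_le:
  assumes g: "\<And>d. 1 \<le> d \<Longrightarrow> d \<le> Q \<Longrightarrow> \<bar>g d\<bar> \<le> Gb" and Gb: "0 \<le> Gb"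
    and \<psi>_low: "\<And>i. i < h \<Longrightarrow> \<psi> i = e1" and \<psi>_high: "\<And>i. h \<le> i \<Longrightarrow> i < 2*h \<Longrightarrow> \<psi> i = e2"
    and e: "\<bar>e1\<bar> \<le> 1" "\<bar>e2\<bar> \<le> 1"
  shows "(\<Sum>(q,b)\<in>farey_pairs Q. (norm (of_real (farey_weight g Q q) * window_coeff \<psi> (2*h) q b))^2)
     \<le> 4 * real h * Gb^2 * (harm Q)^4"
proof -
  define H :: real where "H = harm Q"
  define T where "T q b = (Gb * H)^2 * (2 * real h / ((real q)^2 * dist_int (real b / real q)))" for q b
  have T_nonneg: "0 \<le> T q b" if "1 \<le> b" "b < q" for q b
    unfolding T_def using dist_int_fraction_pos[OF that] by simp
  have "(\<Sum>(q,b)\<in>farey_pairs Q. (norm (of_real (farey_weight g Q q) * window_coeff \<psi> (2*h) q b))^2)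
      \<le> (\<Sum>(q,b)\<in>farey_pairs Q. T q b)"
    unfolding T_def H_def using norm_farey_coeff_sq_le[OF g Gb \<psi>_low \<psi>_high e] by (intro sum_mono) auto
  also have "\<dots> \<le> (\<Sum>(q,b)\<in>(SIGMA q:{1..Q}. {1..<q}). T q b)"
    by (rule sum_mono2) (auto simp: farey_pairs_def intro!: T_nonneg)
  also have "\<dots> = (\<Sum>q\<in>{1..Q}. \<Sum>b\<in>{1..<q}. T q b)"
    by (rule sum.Sigma[symmetric]) auto
  also have "\<dots> \<le> (\<Sum>q\<in>{1..Q}. (Gb * H)^2 * (4 * real h * H) * inverse (real q))"
  proof (rule sum_mono)
    fix q assume q: "q \<in> {1..Q}"
    have "(\<Sum>b\<in>{1..<q}. T q b)
        = (Gb * H)^2 * (2 * real h / (real q)^2) * (\<Sum>b\<in>{1..<q}. 1 / dist_int (real b / real q))"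
      unfolding T_def by (simp add: sum_distrib_left)
    also have "\<dots> \<le> (Gb * H)^2 * (2 * real h / (real q)^2) * (2 * real q * H)"
    proof (rule mult_left_mono)
      have q1: "1 \<le> q" using q by simp
      have "2 * real q * harm q \<le> 2 * real q * H"
        unfolding H_def using q by (intro mult_left_mono harm_mono) auto
      thus "(\<Sum>b\<in>{1..<q}. 1 / dist_int (real b / real q)) \<le> 2 * real q * H"
        using sum_inverse_dist_int_fractions_le[OF q1] by linarith
    qed simp
    also have "\<dots> = (Gb * H)^2 * (4 * real h * H) * inverse (real q)"
      using q by (simp add: power2_eq_square field_simps)
    finally show "(\<Sum>b\<in>{1..<q}. T q b) \<le> (Gb * H)^2 * (4 * real h * H) * inverse (real q)" .
  qed
  also have "\<dots> = (Gb * H)^2 * (4 * real h * H) * H"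
    unfolding H_def by (simp add: harm_def sum_distrib_left)
  also have "\<dots> = 4 * real h * Gb^2 * H^4"
    by (simp add: power2_eq_square power4_eq_xxxx)
  finally show ?thesis
    unfolding H_def .
qed

lemma large_sieve_dvd_deviation:
  fixes g \<psi> :: "nat \<Rightarrow> real"
  assumes g: "\<And>d. 1 \<le> d \<Longrightarrow> d \<le> Q \<Longrightarrow> \<bar>g d\<bar> \<le> Gb" and Gb: "0 \<le> Gb" and Q: "1 \<le> Q"
    and \<psi>_low: "\<And>i. i < h \<Longrightarrow> \<psi> i = e1" and \<psi>_high: "\<And>i. h \<le> i \<Longrightarrow> i < 2*h \<Longrightarrow> \<psi> i = e2"
    and e: "\<bar>e1\<bar> \<le> 1" "\<bar>e2\<bar> \<le> 1"
  shows "(\<Sum>m\<in>{M..<M+N}. (dvd_deviation Q g \<psi> (2*h) m)^2)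
     \<le> (real N + harm (nat \<lfloor>(real Q)^2/2\<rfloor>) * (real Q)^2) * (4 * real h * Gb^2 * (harm Q)^4)"
proof -
  define A where "A r = of_real (farey_weight g Q (fst r)) * window_coeff \<psi> (2*h) (fst r) (snd r)" for r
  define \<alpha> where "\<alpha> r = real (snd r) / real (fst r)" for r
  define \<delta> :: real where "\<delta> = 1 / (real Q)^2"
  have \<delta>: "\<delta> > 0"
    unfolding \<delta>_def using Q by simp
  have spaced: "\<delta> \<le> dist_int (\<alpha> r - \<alpha> s)" if "r \<in> farey_pairs Q" "s \<in> farey_pairs Q" "r \<noteq> s" for r s
    using farey_pairs_spaced[of "fst r" "snd r" Q "fst s" "snd s"] that unfolding \<delta>_def \<alpha>_def by auto
  have "norm (complex_of_real (dvd_deviation Q g \<psi> (2*h) m))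
      = norm (\<Sum>r\<in>farey_pairs Q. A r * e2pi (real m * \<alpha> r))" for m
    unfolding dvd_deviation_farey_expansion A_def \<alpha>_def by (simp add: split_beta)
  hence "(dvd_deviation Q g \<psi> (2*h) m)^2 = (norm (\<Sum>r\<in>farey_pairs Q. A r * e2pi (real m * \<alpha> r)))^2" for m
    by (metis norm_of_real power2_abs)
  hence "(\<Sum>m\<in>{M..<M+N}. (dvd_deviation Q g \<psi> (2*h) m)^2)
      = (\<Sum>m\<in>{M..<M+N}. (norm (\<Sum>r\<in>farey_pairs Q. A r * e2pi (real m * \<alpha> r)))^2)"
    by simp
  also have "\<dots> \<le> (real N + harm (nat \<lfloor>1/(2*\<delta>)\<rfloor>) / \<delta>) * (\<Sum>r\<in>farey_pairs Q. (norm (A r))^2)"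
    by (rule large_sieve[OF finite_farey_pairs \<delta> spaced])
  also have "\<dots> \<le> (real N + harm (nat \<lfloor>(real Q)^2/2\<rfloor>) * (real Q)^2) * (4 * real h * Gb^2 * (harm Q)^4)"
  proof (rule mult_mono)
    show "(\<Sum>r\<in>farey_pairs Q. (norm (A r))^2) \<le> 4 * real h * Gb^2 * (harm Q)^4"
      using sum_farey_coeff_sq_le[OF g Gb \<psi>_low \<psi>_high e] unfolding A_def by (simp add: split_beta)
  qed (simp_all add: \<delta>_def sum_nonneg harm_nonneg)
  finally show ?thesis .
qed

section \<open>Size of the coefficients \<open>g\<close>\<close>

lemma prod_primes_dvd_iff:
  assumes "finite S" "\<And>p. p \<in> S \<Longrightarrow> prime (p::nat)"
  shows "(\<Prod>S) dvd m \<longleftrightarrow> (\<forall>p\<in>S. p dvd m)"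
  using assms
proof (induction S rule: finite_induct)
  case empty thus ?case by simp
next
  case (insert p S)
  have cop: "coprime p (\<Prod>S)"
  proof (rule prod_coprime_right)
    fix q assume q: "q \<in> S"
    have "prime p" "prime q" "p \<noteq> q" using insert q by auto
    thus "coprime p q" by (simp add: primes_coprime)
  qed
  have "(\<Prod>(insert p S)) = p * \<Prod>S" using insert by simp
  hence "(\<Prod>(insert p S)) dvd m \<longleftrightarrow> p dvd m \<and> (\<Prod>S) dvd m"
    using cop by (auto intro: divides_mult dest: dvd_mult_left dvd_mult_right)
  thus ?case using insert by simp
qed

lemma sum_Pow_minus_one_power_card:
  assumes "finite A" "A \<noteq> {}"
  shows "(\<Sum>X\<in>Pow A. (-1::'a::comm_ring_1) ^ card X) = 0"
proof -
  have "(\<Prod>x\<in>A. (1::'a) - 1) = (\<Sum>X\<in>Pow A. (-1) ^ card X * (\<Prod>x\<in>X. 1) * (\<Prod>x\<in>A-X. 1))"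
    by (rule prod_diff_conv_sum[OF assms(1)])
  moreover have "card A > 0"
    using assms by (simp add: card_gt_0_iff)
  ultimately show ?thesis
    by (simp add: zero_power)
qed

lemma prod_dvd_iff_subset_prime_factors:
  fixes P :: "nat set"
  assumes "finite P" "\<And>p. p \<in> P \<Longrightarrow> prime p" "S \<subseteq> P" "k > 0"
  shows "\<Prod>S dvd k \<longleftrightarrow> S \<subseteq> prime_factors k"
proof -
  have "finite S" "\<And>p. p \<in> S \<Longrightarrow> prime p"
    using assms finite_subset by auto
  hence "\<Prod>S dvd k \<longleftrightarrow> (\<forall>p\<in>S. p dvd k)"
    by (rule prod_primes_dvd_iff)
  also have "\<dots> \<longleftrightarrow> S \<subseteq> prime_factors k"
    using \<open>\<And>p. p \<in> S \<Longrightarrow> prime p\<close> \<open>k > 0\<close> by (auto simp: in_prime_factors_iff)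
  finally show ?thesis .
qed

lemma sum_Pow_prod_dvd_minus_one_power_card:
  fixes P :: "nat set"
  assumes fin: "finite P" and prime: "\<And>p. p \<in> P \<Longrightarrow> prime p"
    and k: "k > 0" and sub: "prime_factors k \<subseteq> P"
  shows "(\<Sum>S\<in>Pow P. if \<Prod>S dvd k then (-1::'a::comm_ring_1) ^ card S else 0) = of_bool (k = 1)"
proof -
  have "(\<Sum>S\<in>Pow P. if \<Prod>S dvd k then (-1::'a) ^ card S else 0)
      = (\<Sum>S\<in>{S\<in>Pow P. \<Prod>S dvd k}. (-1) ^ card S)"
    using fin by (intro sum.inter_filter[symmetric]) simp
  also have "{S\<in>Pow P. \<Prod>S dvd k} = Pow (prime_factors k)"
    using prod_dvd_iff_subset_prime_factors[OF fin prime _ k] sub by auto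
  also have "(\<Sum>S\<in>Pow (prime_factors k). (-1::'a) ^ card S) = of_bool (k = 1)"
  proof (cases "k = 1")
    case False
    then obtain p where "prime p" "p dvd k"
      using prime_factor_nat by blast
    hence "prime_factors k \<noteq> {}"
      using k by (auto simp: in_prime_factors_iff simp del: set_mset_eq_empty_iff)
    thus ?thesis
      using False sum_Pow_minus_one_power_card[OF finite_set_mset] by simp
  qed simp
  finally show ?thesis .
qed

lemma divisor_sum_div_prod:
  fixes f g :: "nat \<Rightarrow> real"
  assumes f: "\<And>n. n \<ge> 1 \<Longrightarrow> f n = (\<Sum>d | d dvd n. g d)" and n: "n \<ge> 1" and S: "\<Prod>S dvd n"
  shows "f (n div \<Prod>S) = (\<Sum>d | d dvd n. if \<Prod>S dvd n div d then g d else 0)"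
proof -
  have p0: "\<Prod>S \<noteq> 0"
    using S n by auto
  have k1: "n div \<Prod>S \<ge> 1"
    using S n p0 by (metis dvd_div_eq_0_iff less_one not_le)
  have "{d. d dvd n div \<Prod>S} = {d. d dvd n \<and> \<Prod>S dvd n div d}"
  proof (intro set_eqI iffI; clarsimp)
    fix d assume "d dvd n div \<Prod>S"
    hence dd: "d * \<Prod>S dvd n"
      using dvd_div_iff_mult[OF p0 S] by simp
    moreover have "d \<noteq> 0"
      using dd n by auto
    ultimately show "d dvd n \<and> \<Prod>S dvd n div d"
      using dvd_div_iff_mult[of d n "\<Prod>S"] by (auto simp: mult.commute dest: dvd_mult_left)
  next
    fix d assume d: "d dvd n" "\<Prod>S dvd n div d"
    hence "d \<noteq> 0"
      using n by auto
    hence "\<Prod>S * d dvd n"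
      using d dvd_div_iff_mult[of d n "\<Prod>S"] by simp
    thus "d dvd n div \<Prod>S"
      using dvd_div_iff_mult[OF p0 S] by (simp add: mult.commute)
  qed
  hence "f (n div \<Prod>S) = (\<Sum>d\<in>{d. d dvd n \<and> \<Prod>S dvd n div d}. g d)"
    using f[OF k1] by simp
  also have "\<dots> = (\<Sum>d | d dvd n. if \<Prod>S dvd n div d then g d else 0)"
    using n sum.inter_filter[of "{d. d dvd n}" g "\<lambda>d. \<Prod>S dvd n div d"] by simp
  finally show ?thesis .
qed

lemma divisor_sum_inversion:
  fixes f g :: "nat \<Rightarrow> real"
  assumes f: "\<And>n. n \<ge> 1 \<Longrightarrow> f n = (\<Sum>d | d dvd n. g d)" and n: "n \<ge> 1"
  shows "g n = (\<Sum>S\<in>Pow (prime_factors n). (-1)^card S * f (n div \<Prod>S))"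
proof -
  define P where "P = prime_factors n"
  define D where "D = {d. d dvd n}"
  have finP: "finite P"
    unfolding P_def by simp
  have finD: "finite D"
    unfolding D_def using n by simp
  have prime: "\<And>p. p \<in> P \<Longrightarrow> prime p"
    unfolding P_def by (simp add: in_prime_factors_iff)
  have "(\<Sum>S\<in>Pow P. (-1)^card S * f (n div \<Prod>S))
      = (\<Sum>S\<in>Pow P. \<Sum>d\<in>D. g d * (if \<Prod>S dvd n div d then (-1::real)^card S else 0))"
  proof (rule sum.cong[OF refl])
    fix S assume S: "S \<in> Pow P"
    have "\<Prod>S dvd n"
      using prod_dvd_iff_subset_prime_factors[OF finP prime, of S n] S n
      by (simp add: P_def)
    with f n have "f (n div \<Prod>S) = (\<Sum>d | d dvd n. if \<Prod>S dvd n div d then g d else 0)"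
      by (rule divisor_sum_div_prod)
    thus "(-1)^card S * f (n div \<Prod>S) = (\<Sum>d\<in>D. g d * (if \<Prod>S dvd n div d then (-1::real)^card S else 0))"
      by (auto simp: sum_distrib_left D_def intro!: sum.cong)
  qed
  also have "\<dots> = (\<Sum>d\<in>D. g d * (\<Sum>S\<in>Pow P. if \<Prod>S dvd n div d then (-1::real)^card S else 0))"
    by (subst sum.swap) (simp add: sum_distrib_left)
  also have "\<dots> = (\<Sum>d\<in>D. g d * of_bool (n div d = 1))"
  proof (intro sum.cong refl)
    fix d assume "d \<in> D"
    hence "d dvd n" by (simp add: D_def)
    hence "n div d > 0" "prime_factors (n div d) \<subseteq> P"
      using n by (auto simp: P_def in_prime_factors_iff intro: dvd_trans)
    thus "g d * (\<Sum>S\<in>Pow P. if \<Prod>S dvd n div d then (-1::real)^card S else 0) = g d * of_bool (n div d = 1)"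
      by (simp only: sum_Pow_prod_dvd_minus_one_power_card[OF finP prime])
  qed
  also have "\<dots> = (\<Sum>d\<in>D. if d = n then g d else 0)"
    unfolding D_def using n by (intro sum.cong refl) (auto elim: dvdE)
  also have "\<dots> = g n"
    using finD by (simp add: D_def)
  finally show ?thesis
    unfolding P_def by simp
qed

lemma two_le_powr_unless_small:
  fixes p :: nat
  assumes p: "p \<ge> 1" and a: "a > 0"
  shows "2 \<le> (if p \<le> nat \<lceil>2 powr (1/a)\<rceil> then 2 else 1) * real p powr a"
proof (cases "p \<le> nat \<lceil>2 powr (1/a)\<rceil>")
  case True
  have "1 \<le> real p powr a"
    using p a by (intro ge_one_powr_ge_zero) auto
  thus ?thesis using True by simp
next
  case False
  hence "2 powr (1/a) < real p"
    by linarith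
  hence "(2 powr (1/a)) powr a \<le> real p powr a"
    using a by (intro powr_mono2) auto
  thus ?thesis using False a by (simp add: powr_powr)
qed

lemma two_power_card_prime_factors_le:
  assumes n: "n \<ge> 1" and a: "a > 0"
  shows "2 ^ card (prime_factors n) \<le> 2 ^ nat \<lceil>2 powr (1/a)\<rceil> * real n powr a"
proof -
  define T where "T = nat \<lceil>2 powr (1/a)\<rceil>"
  define P where "P = prime_factors n"
  have finP: "finite P"
    unfolding P_def by simp
  have P: "prime p" "p dvd n" if "p \<in> P" for p
    using that by (auto simp: P_def in_prime_factors_iff)
  \<comment> \<open>Small primes contribute at most \<open>2\<^sup>T\<close>; a large prime \<open>p > 2\<^sup>1\<^sup>/\<^sup>a\<close> has \<open>p\<^sup>a \<ge> 2\<close>.\<close>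
  have "(2::real) ^ card P = (\<Prod>p\<in>P. 2)"
    by simp
  also have "\<dots> \<le> (\<Prod>p\<in>P. (if p \<le> T then 2 else 1) * real p powr a)"
    unfolding T_def using P prime_gt_0_nat a
    by (intro prod_mono conjI two_le_powr_unless_small) (auto simp: Suc_le_eq)
  also have "\<dots> = 2 ^ card {p\<in>P. p \<le> T} * real (\<Prod>P) powr a"
  proof -
    have "(\<Prod>p\<in>P. if p \<le> T then 2 else 1) = (2::real) ^ card {p\<in>P. p \<le> T}"
      using finP by (simp add: prod.If_cases Int_def)
    moreover have "(\<Prod>p\<in>P. real p powr a) = real (\<Prod>P) powr a"
      unfolding of_nat_prod prod_powr_distrib by simp
    ultimately show ?thesis
      by (simp only: prod.distrib)
  qed
  also have "\<dots> \<le> 2 ^ T * real n powr a"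
  proof (rule mult_mono)
    have "{p\<in>P. p \<le> T} \<subseteq> {1..T}"
      using P prime_gt_0_nat by (auto simp: Suc_le_eq)
    hence "card {p\<in>P. p \<le> T} \<le> T"
      using card_mono[of "{1..T}"] by fastforce
    thus "(2::real) ^ card {p\<in>P. p \<le> T} \<le> 2 ^ T"
      by (rule power_increasing) simp
    have "\<Prod>P dvd n"
      using prod_primes_dvd_iff[OF finP] P by blast
    hence "\<Prod>P \<le> n"
      using n by (intro dvd_imp_le) auto
    hence "real (\<Prod>P) \<le> real n"
      by (simp only: of_nat_le_iff)
    thus "real (\<Prod>P) powr a \<le> real n powr a"
      using a by (intro powr_mono2) (simp_all del: of_nat_prod)
  qed simp_all
  finally show ?thesis
    unfolding T_def P_def .
qed

lemma abs_le_of_divisor_sum_bound: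
  fixes f g :: "nat \<Rightarrow> real"
  assumes f: "\<And>n. n \<ge> 1 \<Longrightarrow> f n = (\<Sum>d | d dvd n. g d)" and a: "a > 0"
    and f_le: "\<And>n. n \<ge> 1 \<Longrightarrow> \<bar>f n\<bar> \<le> C * real n powr a" and n: "n \<ge> 1"
  shows "\<bar>g n\<bar> \<le> 2 ^ nat \<lceil>2 powr (1/a)\<rceil> * C * real n powr (2*a)"
proof -
  have C: "0 \<le> C"
    using f_le[of 1] by simp
  have "\<bar>g n\<bar> = \<bar>\<Sum>S\<in>Pow (prime_factors n). (-1)^card S * f (n div \<Prod>S)\<bar>"
    by (rule arg_cong[where f=abs, OF divisor_sum_inversion[OF f n]])
  also have "\<dots> \<le> (\<Sum>S\<in>Pow (prime_factors n). \<bar>(-1)^card S * f (n div \<Prod>S)\<bar>)"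
    by (rule sum_abs)
  also have "\<dots> \<le> (\<Sum>S\<in>Pow (prime_factors n). C * real n powr a)"
  proof (rule sum_mono)
    fix S assume S: "S \<in> Pow (prime_factors n)"
    have "\<Prod>S dvd n"
      using prod_dvd_iff_subset_prime_factors[of "prime_factors n" S n] S n
      by (auto simp: in_prime_factors_iff)
    hence k: "n div \<Prod>S \<ge> 1" "n div \<Prod>S \<le> n"
      using n by (auto simp: Suc_le_eq dvd_div_eq_0_iff div_greater_zero_iff dvd_imp_le)
    have "\<bar>(-1)^card S * f (n div \<Prod>S)\<bar> = \<bar>f (n div \<Prod>S)\<bar>"
      by (simp add: abs_mult)
    also have "\<dots> \<le> C * real (n div \<Prod>S) powr a"
      by (rule f_le[OF k(1)])
    also have "\<dots> \<le> C * real n powr a"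
      using k a C by (intro mult_left_mono powr_mono2) auto
    finally show "\<bar>(-1)^card S * f (n div \<Prod>S)\<bar> \<le> C * real n powr a" .
  qed
  also have "\<dots> = 2 ^ card (prime_factors n) * (C * real n powr a)"
    by (simp add: card_Pow)
  also have "\<dots> \<le> (2 ^ nat \<lceil>2 powr (1/a)\<rceil> * real n powr a) * (C * real n powr a)"
    using two_power_card_prime_factors_le[OF n a] C by (intro mult_right_mono) auto
  also have "\<dots> = 2 ^ nat \<lceil>2 powr (1/a)\<rceil> * C * real n powr (2*a)"
    by (simp add: powr_add[symmetric] mult_2 ac_simps)
  finally show ?thesis .
qed

lemma abs_le_of_ess_bounded_divisor_sum:
  fixes f g :: "nat \<Rightarrow> real"
  assumes f: "\<forall>n\<ge>1. f n = (\<Sum>d | d dvd n. g d)" and "ess_bounded_by C f" and a: "a > 0"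
    and d: "1 \<le> d" "d \<le> Q"
  shows "\<bar>g d\<bar> \<le> 2 ^ nat \<lceil>2 powr (1/a)\<rceil> * \<bar>C a\<bar> * real Q powr (2*a)"
proof -
  have "\<bar>g d\<bar> \<le> 2 ^ nat \<lceil>2 powr (1/a)\<rceil> * C a * real d powr (2*a)"
    using assms by (intro abs_le_of_divisor_sum_bound[where f=f]) (auto simp: ess_bounded_by_def)
  also have "\<dots> \<le> 2 ^ nat \<lceil>2 powr (1/a)\<rceil> * \<bar>C a\<bar> * real Q powr (2*a)"
  proof -
    have "C a * real d powr (2*a) \<le> \<bar>C a\<bar> * real Q powr (2*a)"
      using d a by (intro mult_mono powr_mono2) auto
    thus ?thesis
      by (simp add: mult.assoc)
  qed
  finally show ?thesis .
qed

section \<open>From the integrals to sums over windows\<close>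

lemma integral_step_function:
  fixes F :: "real \<Rightarrow> real" and V :: "nat \<Rightarrow> real"
  assumes FV: "\<And>k x. N \<le> k \<Longrightarrow> k < 2*N \<Longrightarrow> real k < x \<Longrightarrow> x < real k + 1 \<Longrightarrow> F x = V k"
  shows "integral {real N..2 * real N} F = (\<Sum>k\<in>{N..<2*N}. V k)"
proof -
  have "j \<le> N \<Longrightarrow> (F has_integral (\<Sum>k\<in>{N..<N+j}. V k)) {real N..real N + real j}" for j
  proof (induction j)
    case 0
    have "{real N..real N + real 0} = {real N}" by simp
    thus ?case using has_integral_refl(2)[of F "real N"] by simp
  next
    case (Suc j)
    hence IH: "(F has_integral (\<Sum>k\<in>{N..<N+j}. V k)) {real N..real N + real j}" by simp
    have piece: "(F has_integral V (N+j)) {real N + real j..real N + real (Suc j)}"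
    proof (rule has_integral_spike[of "{real N + real j, real N + real (Suc j)}"])
      show "negligible {real N + real j, real N + real (Suc j)}" by (rule negligible_finite) simp
      fix x assume x: "x \<in> {real N + real j..real N + real (Suc j)} - {real N + real j, real N + real (Suc j)}"
      show "F x = V (N+j)" using x Suc.prems by (intro FV) auto
    next
      show "((\<lambda>x. V (N+j)) has_integral V (N+j)) {real N + real j..real N + real (Suc j)}"
        using has_integral_const_real[of "V (N+j)" "real N + real j" "real N + real (Suc j)"] by simp
    qed
    have "(F has_integral (\<Sum>k\<in>{N..<N+j}. V k) + V (N+j)) {real N..real N + real (Suc j)}"
      by (rule has_integral_combine[OF _ _ IH piece]) auto
    thus ?case by simp
  qed
  from this[of N] have "(F has_integral (\<Sum>k\<in>{N..<N+N}. V k)) {real N..real N + real N}" by simp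
  moreover have "real N + real N = 2 * real N" "N + N = 2 * N" by simp_all
  ultimately show ?thesis by (simp add: integral_unique)
qed

lemma window_eq_atLeastAtMost:
  fixes x :: real
  assumes x: "real k < x" "x < real k + 1" and hk: "h \<le> k"
  shows "{n::nat. 1 \<le> n \<and> 0 < \<bar>real n - x\<bar> \<and> \<bar>real n - x\<bar> \<le> real h} = {k+1-h..k+h}"
    and "{n::nat. 1 \<le> n \<and> \<bar>real n - x\<bar> \<le> real h} = {k+1-h..k+h}"
proof -
  have key: "(\<bar>real n - x\<bar> \<le> real h) \<longleftrightarrow> n \<in> {k+1-h..k+h}" for n
  proof
    assume a: "\<bar>real n - x\<bar> \<le> real h"
    hence "real n < real k + 1 + real h" "real k < real n + real h" using x by linarith+
    hence "n < k + 1 + h" "k < n + h" by linarith+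
    thus "n \<in> {k+1-h..k+h}" by auto
  next
    assume "n \<in> {k+1-h..k+h}"
    hence "k + 1 \<le> n + h" "n \<le> k + h" using hk by auto
    hence "real k + 1 \<le> real n + real h" "real n \<le> real k + real h" by linarith+
    thus "\<bar>real n - x\<bar> \<le> real h" using x by linarith
  qed
  have ne: "0 < \<bar>real n - x\<bar>" for n :: nat
  proof -
    have "real n \<noteq> x"
    proof
      assume "real n = x"
      hence "k < n" "n < k + 1" using x by linarith+
      thus False by simp
    qed
    thus ?thesis by simp
  qed
  have pos: "n \<in> {k+1-h..k+h} \<Longrightarrow> 1 \<le> n" for n using hk by auto
  show "{n::nat. 1 \<le> n \<and> 0 < \<bar>real n - x\<bar> \<and> \<bar>real n - x\<bar> \<le> real h} = {k+1-h..k+h}"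
    using key ne pos by blast
  show "{n::nat. 1 \<le> n \<and> \<bar>real n - x\<bar> \<le> real h} = {k+1-h..k+h}"
    using key pos by blast
qed

lemma sgn_diff_window:
  fixes x :: real
  assumes x: "real k < x" "x < real k + 1"
  shows "sgn (real n - x) = (if n \<le> k then -1 else 1)"
proof (cases "n \<le> k")
  case True
  hence "real n \<le> real k" by simp
  thus ?thesis using True x by simp
next
  case False
  hence "real k + 1 \<le> real n" by simp
  thus ?thesis using False x by simp
qed

lemma sum_window_reindex:
  fixes k h :: nat
  assumes "h \<le> k"
  shows "(\<Sum>n\<in>{k+1-h..k+h}. F n) = (\<Sum>i<2*h. F (k + 1 - h + i))"
proof (rule sum.reindex_bij_witness[of _ "\<lambda>i. k + 1 - h + i" "\<lambda>n. n - (k + 1 - h)"])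
qed (use assms in auto)

lemma divisor_sum_truncate:
  fixes f g :: "nat \<Rightarrow> real"
  assumes fg: "\<forall>n\<ge>1. f n = (\<Sum>d | d dvd n. g d)" and gz: "\<forall>q>Q. g q = 0" and n: "n \<ge> 1"
  shows "f n = (\<Sum>d\<in>{1..Q}. g d * of_bool (d dvd n))"
proof -
  have fin: "finite {d. d dvd n}" using n by simp
  have "f n = (\<Sum>d | d dvd n. g d)" using fg n by simp
  also have "\<dots> = (\<Sum>d\<in>{d. d dvd n} \<inter> {1..Q}. g d)"
  proof (rule sum.mono_neutral_right[OF fin])
    show "{d. d dvd n} \<inter> {1..Q} \<subseteq> {d. d dvd n}" by auto
    show "\<forall>i\<in>{d. d dvd n} - {d. d dvd n} \<inter> {1..Q}. g i = 0"
    proof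
      fix i assume i: "i \<in> {d. d dvd n} - {d. d dvd n} \<inter> {1..Q}"
      hence "i dvd n" "\<not> (1 \<le> i \<and> i \<le> Q)" by auto
      moreover have "i \<noteq> 0" using \<open>i dvd n\<close> n by auto
      ultimately have "Q < i" by auto
      thus "g i = 0" using gz by simp
    qed
  qed
  also have "\<dots> = (\<Sum>d\<in>{1..Q}. if d dvd n then g d else 0)"
    by (subst sum.inter_filter[symmetric]) (auto intro!: sum.cong)
  also have "\<dots> = (\<Sum>d\<in>{1..Q}. g d * of_bool (d dvd n))" by (intro sum.cong) auto
  finally show ?thesis .
qed

lemma window_sum_divisor_swap:
  fixes f g \<psi> :: "nat \<Rightarrow> real"
  assumes fg: "\<forall>n\<ge>1. f n = (\<Sum>d | d dvd n. g d)" and gz: "\<forall>q>Q. g q = 0" and m: "m \<ge> 1"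
  shows "(\<Sum>i<L. \<psi> i * f (m+i)) = (\<Sum>d\<in>{1..Q}. g d * (\<Sum>i<L. \<psi> i * of_bool (d dvd m+i)))"
proof -
  have "(\<Sum>i<L. \<psi> i * f (m+i)) = (\<Sum>i<L. \<psi> i * (\<Sum>d\<in>{1..Q}. g d * of_bool (d dvd m+i)))"
    using m by (intro sum.cong refl) (simp add: divisor_sum_truncate[OF fg gz])
  also have "\<dots> = (\<Sum>i<L. \<Sum>d\<in>{1..Q}. \<psi> i * (g d * of_bool (d dvd m+i)))"
    by (simp only: sum_distrib_left)
  also have "\<dots> = (\<Sum>d\<in>{1..Q}. \<Sum>i<L. \<psi> i * (g d * of_bool (d dvd m+i)))"
    by (rule sum.swap)
  also have "\<dots> = (\<Sum>d\<in>{1..Q}. g d * (\<Sum>i<L. \<psi> i * of_bool (d dvd m+i)))"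
    by (simp only: sum_distrib_left mult.left_commute)
  finally show ?thesis .
qed

lemma Mf_truncate:
  assumes gz: "\<forall>q>Q. g q = 0" and Q: "Q \<le> 2*N+h"
  shows "Mf g N h = (\<Sum>d\<in>{1..Q}. g d * ((\<Sum>i<2*h. (1::real)) / real d))"
proof -
  have "(\<Sum>d\<in>{1..2*N+h}. g d / real d) = (\<Sum>d\<in>{1..Q}. g d / real d)"
    by (rule sum.mono_neutral_right) (use gz Q in auto)
  thus ?thesis unfolding Mf_def by (simp add: sum_distrib_left mult_ac)
qed

lemma window_sum_eq_dvd_deviation:
  fixes f g \<psi> :: "nat \<Rightarrow> real"
  assumes fg: "\<forall>n\<ge>1. f n = (\<Sum>d | d dvd n. g d)" and gz: "\<forall>q>Q. g q = 0" and m: "m \<ge> 1"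
    and M: "M = (\<Sum>d\<in>{1..Q}. g d * ((\<Sum>i<L. \<psi> i) / real d))"
  shows "(\<Sum>i<L. \<psi> i * f (m+i)) - M = dvd_deviation Q g \<psi> L m"
  unfolding window_sum_divisor_swap[OF fg gz m] M dvd_deviation_def
  by (simp add: sum_subtractf[symmetric] right_diff_distrib)

lemma selberg_J_eq_sum_dvd_deviation:
  fixes f g :: "nat \<Rightarrow> real"
  assumes fg: "\<forall>n\<ge>1. f n = (\<Sum>d | d dvd n. g d)" and gz: "\<forall>q>Q. g q = 0"
    and hN: "h \<le> N" and QN: "Q \<le> 2*N+h"
  shows "selberg_J f g N h = (\<Sum>m\<in>{N+1-h..<(N+1-h)+N}. (dvd_deviation Q g (\<lambda>_. 1) (2*h) m)^2)"
proof -
  have "selberg_J f g N h = (\<Sum>k\<in>{N..<2*N}. (dvd_deviation Q g (\<lambda>_. 1) (2*h) (k+1-h))^2)"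
    unfolding selberg_J_def
  proof (rule integral_step_function)
    fix k x assume k: "N \<le> k" "k < 2*N" and x: "real k < x" "x < real k + 1"
    have hk: "h \<le> k" using hN k by simp
    have "(\<Sum>n\<in>{n. 1 \<le> n \<and> 0 < \<bar>real n - x\<bar> \<and> \<bar>real n - x\<bar> \<le> real h}. f n) - Mf g N h
        = (\<Sum>i<2*h. 1 * f (k+1-h+i)) - Mf g N h"
      unfolding window_eq_atLeastAtMost(1)[OF x hk] sum_window_reindex[OF hk] by simp
    also have "\<dots> = dvd_deviation Q g (\<lambda>_. 1) (2*h) (k+1-h)"
      using hk by (intro window_sum_eq_dvd_deviation[OF fg gz] Mf_truncate[OF gz QN]) auto
    finally show "\<bar>(\<Sum>n\<in>{n. 1 \<le> n \<and> 0 < \<bar>real n - x\<bar> \<and> \<bar>real n - x\<bar> \<le> real h}. f n) - Mf g N h\<bar>^2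
        = (dvd_deviation Q g (\<lambda>_. 1) (2*h) (k+1-h))^2"
      by simp
  qed
  also have "\<dots> = (\<Sum>m\<in>{N+1-h..<(N+1-h)+N}. (dvd_deviation Q g (\<lambda>_. 1) (2*h) m)^2)"
    using hN by (intro sum.reindex_bij_witness[of _ "\<lambda>m. m + h - 1" "\<lambda>k. k + 1 - h"]) auto
  finally show ?thesis .
qed

lemma symmetry_I_eq_sum_dvd_deviation:
  fixes f g :: "nat \<Rightarrow> real"
  assumes fg: "\<forall>n\<ge>1. f n = (\<Sum>d | d dvd n. g d)" and gz: "\<forall>q>Q. g q = 0" and hN: "h \<le> N"
  defines "\<psi> \<equiv> \<lambda>i. if i < h then -1 else 1 :: real"
  shows "symmetry_I f N h = (\<Sum>m\<in>{N+1-h..<(N+1-h)+N}. (dvd_deviation Q g \<psi> (2*h) m)^2)"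
proof -
  have mean_zero: "(\<Sum>i<2*h. \<psi> i) = 0"
  proof -
    have split: "{..<2*h} = {..<h} \<union> {h..<2*h}" by auto
    have "(\<Sum>i<2*h. \<psi> i) = (\<Sum>i<h. \<psi> i) + (\<Sum>i\<in>{h..<2*h}. \<psi> i)"
      unfolding split by (rule sum.union_disjoint) auto
    thus ?thesis by (simp add: \<psi>_def)
  qed
  have "symmetry_I f N h = (\<Sum>k\<in>{N..<2*N}. (dvd_deviation Q g \<psi> (2*h) (k+1-h))^2)"
    unfolding symmetry_I_def
  proof (rule integral_step_function)
    fix k x assume k: "N \<le> k" "k < 2*N" and x: "real k < x" "x < real k + 1"
    have hk: "h \<le> k" using hN k by simp
    have "(\<Sum>n\<in>{n. 1 \<le> n \<and> \<bar>real n - x\<bar> \<le> real h}. sgn (real n - x) * f n)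
        = (\<Sum>i<2*h. \<psi> i * f (k+1-h+i)) - 0"
      unfolding window_eq_atLeastAtMost(2)[OF x hk] sum_window_reindex[OF hk] diff_0_right
    proof (rule sum.cong[OF refl])
      fix i assume "i \<in> {..<2*h}"
      hence "sgn (real (k+1-h+i) - x) = \<psi> i"
        unfolding sgn_diff_window[OF x] \<psi>_def using hk by auto
      thus "sgn (real (k+1-h+i) - x) * f (k+1-h+i) = \<psi> i * f (k+1-h+i)"
        by (simp only:)
    qed
    also have "\<dots> = dvd_deviation Q g \<psi> (2*h) (k+1-h)"
      using hk by (intro window_sum_eq_dvd_deviation[OF fg gz]) (simp_all add: mean_zero)
    finally show "\<bar>\<Sum>n\<in>{n. 1 \<le> n \<and> \<bar>real n - x\<bar> \<le> real h}. sgn (real n - x) * f n\<bar>^2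
        = (dvd_deviation Q g \<psi> (2*h) (k+1-h))^2"
      by simp
  qed
  also have "\<dots> = (\<Sum>m\<in>{N+1-h..<(N+1-h)+N}. (dvd_deviation Q g \<psi> (2*h) m)^2)"
    using hN by (intro sum.reindex_bij_witness[of _ "\<lambda>m. m + h - 1" "\<lambda>k. k + 1 - h"]) auto
  finally show ?thesis .
qed

lemma selberg_J_le:
  fixes f g :: "nat \<Rightarrow> real"
  assumes fg: "\<forall>n\<ge>1. f n = (\<Sum>d | d dvd n. g d)" and gz: "\<forall>q>Q. g q = 0"
    and hN: "h \<le> N" and QN: "Q \<le> 2*N+h" and Q: "1 \<le> Q"
    and g_le: "\<And>d. 1 \<le> d \<Longrightarrow> d \<le> Q \<Longrightarrow> \<bar>g d\<bar> \<le> Gb" and Gb: "0 \<le> Gb"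
  shows "selberg_J f g N h
     \<le> (real N + harm (nat \<lfloor>(real Q)^2/2\<rfloor>) * (real Q)^2) * (4 * real h * Gb^2 * (harm Q)^4)"
  unfolding selberg_J_eq_sum_dvd_deviation[OF fg gz hN QN]
  by (rule large_sieve_dvd_deviation[OF g_le Gb Q, where ?e1.0=1 and ?e2.0=1]) auto

lemma symmetry_I_le:
  fixes f g :: "nat \<Rightarrow> real"
  assumes fg: "\<forall>n\<ge>1. f n = (\<Sum>d | d dvd n. g d)" and gz: "\<forall>q>Q. g q = 0"
    and hN: "h \<le> N" and Q: "1 \<le> Q"
    and g_le: "\<And>d. 1 \<le> d \<Longrightarrow> d \<le> Q \<Longrightarrow> \<bar>g d\<bar> \<le> Gb" and Gb: "0 \<le> Gb"
  shows "symmetry_I f N h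
     \<le> (real N + harm (nat \<lfloor>(real Q)^2/2\<rfloor>) * (real Q)^2) * (4 * real h * Gb^2 * (harm Q)^4)"
  unfolding symmetry_I_eq_sum_dvd_deviation[OF fg gz hN]
  by (rule large_sieve_dvd_deviation[OF g_le Gb Q, where ?e1.0="-1" and ?e2.0=1]) auto

section \<open>The power saving\<close>

lemma harm_le_powr:
  assumes a: "a > 0" and n: "n \<ge> 1"
  shows "harm n \<le> (1 + 1/a) * real n powr a"
proof -
  have "harm n - ln (real n) \<le> harm 1 - ln (real (1::nat))"
    using euler_mascheroni_sequence_decreasing[of 1 n] n by simp
  hence "harm n \<le> 1 + ln (real n)"
    by (simp add: harm_def)
  moreover have "ln (real n powr a) \<le> real n powr a - 1"
    using n by (intro ln_le_minus_one) simp
  hence "ln (real n) \<le> real n powr a / a"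
    using a n by (simp add: ln_powr field_simps)
  moreover have "1 \<le> real n powr a"
    using n a by (intro ge_one_powr_ge_zero) auto
  ultimately have "harm n \<le> real n powr a + real n powr a / a"
    by linarith
  thus ?thesis
    by (simp add: field_simps)
qed

lemma mult_powr_le_self:
  fixes c t X :: real
  assumes c: "0 < c" and t: "t < 1" and X: "c powr (1/(1-t)) \<le> X"
  shows "c * X powr t \<le> X"
proof -
  have X0: "0 < X"
    using X c by (smt (verit) powr_gt_zero)
  have "c = (c powr (1/(1-t))) powr (1-t)"
    using c t by (simp add: powr_powr)
  also have "\<dots> \<le> X powr (1-t)"
    using X t c by (intro powr_mono2) auto
  finally have "c * X powr t \<le> X powr (1-t) * X powr t"
    using X0 by (intro mult_right_mono) auto
  also have "\<dots> = X"
    using X0 by (simp add: powr_add[symmetric])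
  finally show ?thesis .
qed

lemma large_sieve_bound_le_powr:
  fixes X q h G H H2 c a :: real
  assumes q: "1 \<le> q" and c: "1 \<le> c" and X: "0 \<le> X" and h: "0 \<le> h"
    and H2: "0 \<le> H2" "H2 \<le> c * q powr (2*a)" and H: "0 \<le> H" "H \<le> c * q powr a"
  shows "(X + H2 * q^2) * (4 * h * (G * q powr (2*a))^2 * H^4)
     \<le> 4 * G^2 * c^5 * h * (X * q powr (8*a) + q powr (2 + 10*a))"
proof -
  have q0: "0 < q"
    using q by simp
  have "H2 * q^2 \<le> c * q powr (2*a) * q^2"
    using H2(2) by (rule mult_right_mono) simp
  also have "\<dots> = c * q powr (2 + 2*a)"
    using q0 by (simp add: powr_add)
  finally have first: "X + H2 * q^2 \<le> X + c * q powr (2 + 2*a)"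
    by simp
  have "H^4 \<le> (c * q powr a)^4"
    using H by (intro power_mono) auto
  hence "(G * q powr (2*a))^2 * H^4 \<le> (G * q powr (2*a))^2 * (c * q powr a)^4"
    by (rule mult_left_mono) simp
  also have "\<dots> = G^2 * c^4 * ((q powr (2*a))^2 * (q powr a)^4)"
    by (simp add: power_mult_distrib)
  also have "(q powr (2*a))^2 * (q powr a)^4 = q powr (8*a)"
    using q0 by (simp add: powr_power powr_add[symmetric])
  finally have second: "(G * q powr (2*a))^2 * H^4 \<le> G^2 * c^4 * q powr (8*a)" .
  have "(X + H2 * q^2) * (4 * h * (G * q powr (2*a))^2 * H^4)
      = 4 * h * ((X + H2 * q^2) * ((G * q powr (2*a))^2 * H^4))"
    by (simp add: ac_simps)
  also have "\<dots> \<le> 4 * h * ((X + c * q powr (2 + 2*a)) * (G^2 * c^4 * q powr (8*a)))"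
    using X c h by (intro mult_left_mono mult_mono[OF first second]) auto
  also have "\<dots> = 4 * G^2 * c^4 * h * (X * q powr (8*a) + c * (q powr (2 + 2*a) * q powr (8*a)))"
    by (simp add: algebra_simps)
  also have "q powr (2 + 2*a) * q powr (8*a) = q powr (2 + 10*a)"
    by (simp add: powr_add[symmetric] add.commute)
  also have "4 * G^2 * c^4 * h * (X * q powr (8*a) + c * q powr (2 + 10*a))
      \<le> 4 * G^2 * c^4 * h * (c * (X * q powr (8*a)) + c * q powr (2 + 10*a))"
    using c h mult_nonneg_nonneg[OF X powr_ge_zero[of q "8*a"]]
    by (intro mult_left_mono add_right_mono) (auto simp: mult_le_cancel_right1)
  also have "\<dots> = 4 * G^2 * (c^4 * c) * h * (X * q powr (8*a) + q powr (2 + 10*a))"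
    by (simp add: algebra_simps)
  also have "c^4 * c = c^5"
    by (simp add: power_Suc2[symmetric])
  finally show ?thesis .
qed

lemma powr_le_of_le_mult_powr:
  fixes q c X lam s t :: real
  assumes q: "0 < q" "q \<le> c * X powr lam" and X: "1 \<le> X" and s: "0 \<le> s" "lam * s \<le> t"
  shows "q powr s \<le> c powr s * X powr t"
proof -
  have "0 < c * X powr lam"
    using q by linarith
  hence c: "0 < c"
    using X by (simp add: zero_less_mult_iff)
  have "q powr s \<le> (c * X powr lam) powr s"
    using q s by (intro powr_mono2) auto
  also have "\<dots> = c powr s * X powr (lam * s)"
    using c X by (simp add: powr_mult powr_powr)
  also have "\<dots> \<le> c powr s * X powr t"
    using X s by (intro mult_left_mono powr_mono) auto
  finally show ?thesis .
qed

lemma power_saving_le: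
  fixes X q h c c1 a lam \<theta> e0 :: real
  assumes X: "1 \<le> X" and q: "0 < q" "q \<le> c * X powr lam" and lam: "0 \<le> lam" "lam \<le> 1"
    and h: "c1 * X powr \<theta> \<le> h" and c1: "0 < c1" and a: "0 < a"
    and e1: "8*a - \<theta> \<le> -e0" and e2: "2*lam + 10*a - \<theta> \<le> 1 - e0"
  shows "h * (X * q powr (8*a) + q powr (2 + 10*a))
     \<le> (c powr (8*a) + c powr (2 + 10*a)) / c1 * X * h^2 * X powr (-e0)"
proof -
  have h0: "0 \<le> h"
    using h c1 X by (meson dual_order.trans mult_nonneg_nonneg less_imp_le powr_ge_zero)
  note q_powr = powr_le_of_le_mult_powr[OF q X]
  have "lam * (8*a) \<le> \<theta> - e0"
    using lam a e1 mult_left_le_one_le[of "8*a" lam] by linarith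
  hence "X * q powr (8*a) \<le> X * (c powr (8*a) * X powr (\<theta> - e0))"
    using X a by (intro mult_left_mono q_powr) auto
  also have "\<dots> = c powr (8*a) * X powr (1 + \<theta> - e0)"
  proof -
    have "X powr (1 + \<theta> - e0) = X powr 1 * X powr (\<theta> - e0)"
      unfolding powr_add[symmetric] by (simp add: algebra_simps)
    thus ?thesis
      using X by simp
  qed
  finally have A: "X * q powr (8*a) \<le> c powr (8*a) * X powr (1 + \<theta> - e0)" .
  have "lam * (10*a) \<le> 10*a"
    using lam a by (intro mult_left_le_one_le) auto
  moreover have "lam * (2 + 10*a) = 2*lam + lam * (10*a)"
    by (simp add: algebra_simps)
  ultimately have "lam * (2 + 10*a) \<le> 1 + \<theta> - e0"
    using e2 by linarith
  hence B: "q powr (2 + 10*a) \<le> c powr (2 + 10*a) * X powr (1 + \<theta> - e0)"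
    using a by (intro q_powr) auto
  have "X powr (1 + \<theta> - e0) = X powr 1 * X powr (-e0) * X powr \<theta>"
    unfolding powr_add[symmetric] by (simp add: algebra_simps)
  also have "\<dots> = X * X powr (-e0) * X powr \<theta>"
    using X by simp
  also have "\<dots> \<le> X * X powr (-e0) * (h / c1)"
    using h c1 X by (intro mult_left_mono) (auto simp: field_simps)
  finally have C: "X powr (1 + \<theta> - e0) \<le> X * X powr (-e0) * (h / c1)" .
  have "X * q powr (8*a) + q powr (2 + 10*a) \<le> (c powr (8*a) + c powr (2 + 10*a)) * X powr (1 + \<theta> - e0)"
    using A B by (simp add: distrib_right)
  also have "\<dots> \<le> (c powr (8*a) + c powr (2 + 10*a)) * (X * X powr (-e0) * (h / c1))"
    using C by (intro mult_left_mono) auto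
  finally have "h * (X * q powr (8*a) + q powr (2 + 10*a))
      \<le> h * ((c powr (8*a) + c powr (2 + 10*a)) * (X * X powr (-e0) * (h / c1)))"
    using h0 by (intro mult_left_mono)
  thus ?thesis
    by (simp add: power2_eq_square ac_simps)
qed

lemma window_integrals_le_powr:
  fixes f g :: "nat \<Rightarrow> real"
  assumes fg: "\<forall>n\<ge>1. f n = (\<Sum>d | d dvd n. g d)" and gz: "\<forall>q>Q. g q = 0"
    and f_bounded: "ess_bounded_by C f" and a: "0 < a"
    and hN: "h \<le> N" and QN: "Q \<le> N" and Q: "1 \<le> Q"
  defines "B \<equiv> 4 * (2 ^ nat \<lceil>2 powr (1/a)\<rceil> * \<bar>C a\<bar>)^2 * (1 + 1/a)^5"
  shows "selberg_J f g N h \<le> B * real h * (real N * real Q powr (8*a) + real Q powr (2 + 10*a))"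
    and "symmetry_I f N h \<le> B * real h * (real N * real Q powr (8*a) + real Q powr (2 + 10*a))"
proof -
  define G where "G = 2 ^ nat \<lceil>2 powr (1/a)\<rceil> * \<bar>C a\<bar>"
  define Gb where "Gb = G * real Q powr (2*a)"
  have g_le: "\<bar>g d\<bar> \<le> Gb" if "1 \<le> d" "d \<le> Q" for d
    unfolding Gb_def G_def by (rule abs_le_of_ess_bounded_divisor_sum[OF fg f_bounded a that])
  have Gb: "0 \<le> Gb"
    unfolding Gb_def G_def by simp
  have H2: "harm (nat \<lfloor>(real Q)^2/2\<rfloor>) \<le> (1 + 1/a) * real Q powr (2*a)"
  proof -
    have "\<lfloor>(real Q)^2/2\<rfloor> \<le> \<lfloor>real (Q^2)\<rfloor>"
      by (intro floor_mono) simp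
    hence "nat \<lfloor>(real Q)^2/2\<rfloor> \<le> Q^2"
      by (simp only: floor_of_nat nat_le_iff)
    hence "harm (nat \<lfloor>(real Q)^2/2\<rfloor>) \<le> (harm (Q^2) :: real)"
      by (rule harm_mono)
    also have "\<dots> \<le> (1 + 1/a) * real (Q^2) powr a"
      using Q by (intro harm_le_powr a) simp
    also have "real (Q^2) powr a = (real Q powr 2) powr a"
      by (simp add: powr_numeral)
    also have "\<dots> = real Q powr (2*a)"
      by (simp only: powr_powr)
    finally show ?thesis .
  qed
  have bound: "(real N + harm (nat \<lfloor>(real Q)^2/2\<rfloor>) * (real Q)^2) * (4 * real h * Gb^2 * (harm Q)^4)
      \<le> B * real h * (real N * real Q powr (8*a) + real Q powr (2 + 10*a))"
    unfolding Gb_def B_def G_def[symmetric]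
    by (rule large_sieve_bound_le_powr[OF _ _ _ _ harm_nonneg H2 harm_nonneg harm_le_powr[OF a Q]])
      (use Q a in auto)
  show "selberg_J f g N h \<le> B * real h * (real N * real Q powr (8*a) + real Q powr (2 + 10*a))"
    using selberg_J_le[OF fg gz hN _ Q g_le Gb] QN bound by simp
  show "symmetry_I f N h \<le> B * real h * (real N * real Q powr (8*a) + real Q powr (2 + 10*a))"
    using symmetry_I_le[OF fg gz hN Q g_le Gb] bound by simp
qed

lemma large_N_window_bounds:
  fixes \<theta> lam c c2 :: real
  assumes \<theta>: "\<theta> < 1" and lam: "0 \<le> lam" "lam < 1" and c2: "0 < c2" and c: "c2 \<le> c" "1 \<le> c"
    and N: "max (c2 powr (1/(1-\<theta>))) (c powr (1/(1-lam))) < real N"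
    and h: "real h \<le> c2 * real N powr \<theta>" and Q: "real Q \<le> c2 * real N powr lam"
  shows "h \<le> N" "max Q 1 \<le> N" "real (max Q 1) \<le> c * real N powr lam"
proof -
  have "0 < real N"
    using N max.cobounded1[of "c2 powr (1/(1-\<theta>))" "c powr (1/(1-lam))"] powr_ge_zero[of c2 "1/(1-\<theta>)"]
    by linarith
  hence N1: "1 \<le> real N"
    by simp
  have "c2 * real N powr \<theta> \<le> real N"
    using N by (intro mult_powr_le_self[OF c2 \<theta>]) simp
  hence "real h \<le> real N"
    using h by linarith
  thus "h \<le> N" by simp
  have "1 \<le> real N powr lam"
    using N1 lam by (intro ge_one_powr_ge_zero) auto
  hence "c2 * real N powr lam \<le> c * real N powr lam" "1 * real N powr lam \<le> c * real N powr lam"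
    using c by (intro mult_right_mono; simp)+
  hence "real Q \<le> c * real N powr lam" "1 \<le> c * real N powr lam"
    using Q \<open>1 \<le> real N powr lam\<close> by linarith+
  thus "real (max Q 1) \<le> c * real N powr lam"
    by (simp add: of_nat_max)
  moreover have "c * real N powr lam \<le> real N"
    using N c2 c by (intro mult_powr_le_self[OF _ lam(2)]) auto
  ultimately show "max Q 1 \<le> N"
    by linarith
qed

lemma window_integrals_power_saving:
  fixes \<theta> lam a e0 c c1 c2 :: real and f g :: "nat \<Rightarrow> real"
  assumes \<theta>: "\<theta> < 1" and lam: "0 \<le> lam" "lam < 1" and a: "0 < a"
    and e1: "8*a - \<theta> \<le> -e0" and e2: "2*lam + 10*a - \<theta> \<le> 1 - e0"
    and c1: "0 < c1" and c2: "0 < c2" and c: "c2 \<le> c" "1 \<le> c"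
    and N: "max (c2 powr (1/(1-\<theta>))) (c powr (1/(1-lam))) < real N"
    and h: "c1 * real N powr \<theta> \<le> real h" "real h \<le> c2 * real N powr \<theta>"
    and Q: "real Q \<le> c2 * real N powr lam"
    and f_bounded: "ess_bounded_by C f" and fg: "\<forall>n\<ge>1. f n = (\<Sum>d | d dvd n. g d)"
    and gz: "\<forall>q>Q. g q = 0"
  defines "K \<equiv> 4 * (2 ^ nat \<lceil>2 powr (1/a)\<rceil> * \<bar>C a\<bar>)^2 * (1 + 1/a)^5
                 * (c powr (8*a) + c powr (2 + 10*a)) / c1"
  shows "selberg_J f g N h \<le> K * real N * (real h)^2 * real N powr (-e0) \<and>
         symmetry_I f N h \<le> K * real N * (real h)^2 * real N powr (-e0)"
proof -
  define B where "B = 4 * (2 ^ nat \<lceil>2 powr (1/a)\<rceil> * \<bar>C a\<bar>)^2 * (1 + 1/a)^5"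
  define Q' where "Q' = max Q 1"
  obtain hN: "h \<le> N" and Q'N: "Q' \<le> N" and Q'c: "real Q' \<le> c * real N powr lam"
    using large_N_window_bounds[OF \<theta> lam c2 c N h(2) Q] unfolding Q'_def by blast
  have Q'1: "1 \<le> Q'" and gz': "\<forall>q>Q'. g q = 0"
    using gz by (simp_all add: Q'_def)
  have "1 \<le> real N"
    using hN Q'N Q'1 by simp
  hence "real h * (real N * real Q' powr (8*a) + real Q' powr (2 + 10*a))
      \<le> (c powr (8*a) + c powr (2 + 10*a)) / c1 * real N * (real h)^2 * real N powr (-e0)"
    using Q'1 lam by (intro power_saving_le[OF _ _ Q'c _ _ h(1) c1 a e1 e2]) auto
  moreover have "0 \<le> B"
    unfolding B_def using a by simp
  ultimately have "B * (real h * (real N * real Q' powr (8*a) + real Q' powr (2 + 10*a)))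
      \<le> B * ((c powr (8*a) + c powr (2 + 10*a)) / c1 * real N * (real h)^2 * real N powr (-e0))"
    by (rule mult_left_mono)
  hence "B * real h * (real N * real Q' powr (8*a) + real Q' powr (2 + 10*a))
      \<le> K * real N * (real h)^2 * real N powr (-e0)"
    unfolding K_def B_def[symmetric] by (simp add: algebra_simps)
  thus ?thesis
    using window_integrals_le_powr[OF fg gz' f_bounded a hN Q'N Q'1, folded B_def] by linarith
qed

lemma selberg_symmetry_power_saving:
  fixes \<theta> lam a e0 c1 c2 :: real and C :: "real \<Rightarrow> real"
  assumes \<theta>: "\<theta> < 1" and lam: "0 \<le> lam" "lam < 1" and a: "0 < a"
    and e1: "8*a - \<theta> \<le> -e0" and e2: "2*lam + 10*a - \<theta> \<le> 1 - e0"
    and c1: "0 < c1" and c2: "0 < c2"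
  shows "\<exists>K N0. \<forall>(N::nat) (h::nat) (Q::nat) (f::nat \<Rightarrow> real) (g::nat \<Rightarrow> real).
       N \<ge> N0 \<longrightarrow>
       c1 * real N powr \<theta> \<le> real h \<longrightarrow> real h \<le> c2 * real N powr \<theta> \<longrightarrow>
       c1 * real N powr lam \<le> real Q \<longrightarrow> real Q \<le> c2 * real N powr lam \<longrightarrow>
       ess_bounded_by C f \<longrightarrow>
       (\<forall>n\<ge>1. f n = (\<Sum>d | d dvd n. g d)) \<longrightarrow>
       (\<forall>q>Q. g q = 0) \<longrightarrow>
       selberg_J f g N h \<le> K * real N * (real h)^2 * real N powr (-e0) \<and>
       symmetry_I f N h \<le> K * real N * (real h)^2 * real N powr (-e0)"
proof -
  define c where "c = c2 + 1"
  have c: "c2 \<le> c" "1 \<le> c"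
    unfolding c_def using c2 by simp_all
  define N0 where "N0 = nat \<lceil>max (c2 powr (1/(1-\<theta>))) (c powr (1/(1-lam)))\<rceil> + 1"
  have "max (c2 powr (1/(1-\<theta>))) (c powr (1/(1-lam))) < real N" if "N0 \<le> N" for N
    using that unfolding N0_def by linarith
  thus ?thesis
    using window_integrals_power_saving[OF \<theta> lam a e1 e2 c1 c2 c] by blast
qed

theorem mainTheorem2:
  fixes \<theta> lam :: real
  assumes "0 < \<theta>" "\<theta> < 1" "0 \<le> lam" "lam < (1 + \<theta>) / 2"
  shows "\<exists>\<epsilon>0>0. \<forall>c1 c2 :: real. \<forall>C :: real \<Rightarrow> real. 0 < c1 \<longrightarrow> 0 < c2 \<longrightarrow>
    (\<exists>K N0. \<forall>(N::nat) (h::nat) (Q::nat) (f::nat \<Rightarrow> real) (g::nat \<Rightarrow> real).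
       N \<ge> N0 \<longrightarrow>
       c1 * real N powr \<theta> \<le> real h \<longrightarrow> real h \<le> c2 * real N powr \<theta> \<longrightarrow>
       c1 * real N powr lam \<le> real Q \<longrightarrow> real Q \<le> c2 * real N powr lam \<longrightarrow>
       ess_bounded_by C f \<longrightarrow>
       (\<forall>n\<ge>1. f n = (\<Sum>d | d dvd n. g d)) \<longrightarrow>
       (\<forall>q>Q. g q = 0) \<longrightarrow>
       selberg_J f g N h \<le> K * real N * (real h)^2 * real N powr (-\<epsilon>0) \<and>
       symmetry_I f N h \<le> K * real N * (real h)^2 * real N powr (-\<epsilon>0))"
proof -
  define \<mu> where "\<mu> = min \<theta> (1 + \<theta> - 2*lam)"
  have \<mu>: "0 < \<mu>" "\<mu> \<le> \<theta>" "2*lam \<le> 1 + \<theta> - \<mu>"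
    unfolding \<mu>_def using assms by auto
  have e: "8*(\<mu>/48) - \<theta> \<le> -(\<mu>/2)" "2*lam + 10*(\<mu>/48) - \<theta> \<le> 1 - \<mu>/2"
    using \<mu> by simp_all
  have "lam < 1"
    using assms by simp
  show ?thesis
  proof (rule exI[of _ "\<mu>/2"], intro conjI allI impI, goal_cases)
    case 1
    show ?case using \<mu> by simp
  next
    case (2 c1 c2 C)
    show ?case
      by (rule selberg_symmetry_power_saving[OF assms(2,3) \<open>lam < 1\<close> _ e 2]) (use \<mu> in simp)
  qed
qed

end
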